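(* Let $S$ be a countable discrete inverse semigroup with identity, $\alpha\colon S\to\mathcal I(X)$ a representation and $\phi\colon\mathcal R_X\to\mathbb C$ a bounded linear functional with $\phi(AB)=\phi(BA)$ for all $A,B\in\mathcal R_X$. Then $\phi(T)=\phi(\mathcal E(T))$ for every $T\in\mathcal R_X$.
   Context: Inverse semigroup: each $s$ has a unique $s^*$ with $ss^*s=s$, $s^*ss^*=s^*$. A representation is a unital homomorphism $\alpha\colon S\to\mathcal I(X)$ into partial bijections of $X$; $D_{s^*s}$ is the domain of $\alpha_s$. On $\ell^2(X)$ with basis $\{\delta_x\}$, $V_s\delta_x=\delta_{\alpha_s(x)}$ if $x\in D_{s^*s}$, else $0$; $\ell^\infty(X)$ acts by multiplication operators; $\mathcal R_X$ is the C*-algebra generated by $\{V_s\}\cup\ell^\infty(X)$. $\mathcal E\colon\mathcal B(\ell^2(X))\to\ell^\infty(X)$ is the conditional expectation $\mathcal E(T)=\sum_{x\in X}P_{\{x\}}TP_{\{x\}}$ (strong operator topology), where $P_{\{x\}}$ is the projection onto $\mathbb C\delta_x$. *)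

theory Defs
  imports "HOL-Analysis.Analysis"
begin

type_synonym 'x vec = "'x \<Rightarrow> complex"
type_synonym 'x op = "'x vec \<Rightarrow> 'x vec"

definition ell2 :: "'x vec set" where
  "ell2 = {f. (\<lambda>x. (cmod (f x))^2) summable_on UNIV}"

definition l2norm :: "'x vec \<Rightarrow> real" where
  "l2norm f = sqrt (infsum (\<lambda>x. (cmod (f x))^2) UNIV)"

definition l2inner :: "'x vec \<Rightarrow> 'x vec \<Rightarrow> complex" where
  "l2inner f g = infsum (\<lambda>x. cnj (f x) * g x) UNIV"

text \<open>An operator is a function on all of 'x vec
  which is linear and bounded on l2, maps l2 to l2, and is 0 off l2
  (normalisation so that operators are determined by their action on l2).\<close>

definition is_bounded_op :: "'x op \<Rightarrow> bool" where
  "is_bounded_op T \<longleftrightarrow>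
     (\<forall>f. f \<notin> ell2 \<longrightarrow> T f = (\<lambda>_. 0)) \<and>
     (\<forall>f\<in>ell2. T f \<in> ell2) \<and>
     (\<forall>f\<in>ell2. \<forall>g\<in>ell2. \<forall>a b.
        T (\<lambda>x. a * f x + b * g x) = (\<lambda>x. a * T f x + b * T g x)) \<and>
     (\<exists>K. \<forall>f\<in>ell2. l2norm (T f) \<le> K * l2norm f)"

definition opnorm :: "'x op \<Rightarrow> real" where
  "opnorm T = Sup {l2norm (T f) | f. f \<in> ell2 \<and> l2norm f \<le> 1}"

definition op_plus :: "'x op \<Rightarrow> 'x op \<Rightarrow> 'x op" where
  "op_plus A B = (\<lambda>f x. A f x + B f x)"

definition op_minus :: "'x op \<Rightarrow> 'x op \<Rightarrow> 'x op" where
  "op_minus A B = (\<lambda>f x. A f x - B f x)"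

definition op_scale :: "complex \<Rightarrow> 'x op \<Rightarrow> 'x op" where
  "op_scale c A = (\<lambda>f x. c * A f x)"

text \<open>Operator product is composition \<open>A \<circ> B\<close>.\<close>

definition adj :: "'x op \<Rightarrow> 'x op" where
  "adj T = (SOME T'. is_bounded_op T' \<and>
              (\<forall>f\<in>ell2. \<forall>g\<in>ell2. l2inner (T f) g = l2inner f (T' g)))"

definition is_cstar_subalg :: "'x op set \<Rightarrow> bool" where
  "is_cstar_subalg A \<longleftrightarrow>
     A \<subseteq> {T. is_bounded_op T} \<and>
     (\<forall>S\<in>A. \<forall>T\<in>A. op_plus S T \<in> A) \<and>
     (\<forall>c. \<forall>T\<in>A. op_scale c T \<in> A) \<and>
     (\<forall>S\<in>A. \<forall>T\<in>A. S \<circ> T \<in> A) \<and>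
     (\<forall>T\<in>A. adj T \<in> A) \<and>
     (\<forall>T. is_bounded_op T \<and> (\<forall>\<epsilon>>0. \<exists>B\<in>A. opnorm (op_minus T B) < \<epsilon>) \<longrightarrow> T \<in> A)"

definition cstar_gen :: "'x op set \<Rightarrow> 'x op set" where
  "cstar_gen G = \<Inter>{A. is_cstar_subalg A \<and> G \<subseteq> A}"

definition linfty :: "'x vec set" where
  "linfty = {g. \<exists>K. \<forall>x. cmod (g x) \<le> K}"

definition mult_op :: "'x vec \<Rightarrow> 'x op" where
  "mult_op g f = (if f \<in> ell2 then (\<lambda>x. g x * f x) else (\<lambda>_. 0))"

text \<open>V_s delta_x = delta_{alpha_s x} for x in the domain of alpha_s, else 0,
  extended linearly and continuously.\<close>
definition Vop :: "('s \<Rightarrow> ('x \<rightharpoonup> 'x)) \<Rightarrow> 's \<Rightarrow> 'x op" where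
  "Vop \<alpha> s f = (if f \<in> ell2 then
      (\<lambda>y. if \<exists>x. \<alpha> s x = Some y then f (THE x. \<alpha> s x = Some y) else 0)
    else (\<lambda>_. 0))"

definition RX :: "('s \<Rightarrow> ('x \<rightharpoonup> 'x)) \<Rightarrow> 'x op set" where
  "RX \<alpha> = cstar_gen (range (Vop \<alpha>) \<union> mult_op ` linfty)"

definition proj :: "'x \<Rightarrow> 'x op" where
  "proj x f = (if f \<in> ell2 then (\<lambda>y. if y = x then f x else 0) else (\<lambda>_. 0))"

text \<open>E(T) = sum over x of P_x T P_x, the sum converging in the strong operator
  topology: E(T) f is the l2-limit of the net of finite partial sums.\<close>
definition condexp :: "'x op \<Rightarrow> 'x op" where
  "condexp T f = (if f \<in> ell2 then
      (THE g. g \<in> ell2 \<and> (\<forall>\<epsilon>>0. \<exists>F0. finite F0 \<and>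
          (\<forall>F. finite F \<and> F0 \<subseteq> F \<longrightarrow>
             l2norm (\<lambda>y. (\<Sum>x\<in>F. proj x (T (proj x f)) y) - g y) < \<epsilon>)))
    else (\<lambda>_. 0))"

end

theory Submission
  imports Defs
begin

text \<open>Finite sums of weighted partial shifts \<open>M\<^sub>g V\<^sub>s\<close> form a \<open>*\<close>-algebra, because
  \<open>V\<^sub>s M\<^sub>h = M\<^sub>h\<^sub>\<circ>\<^sub>\<alpha>\<^sub>s\<^sub>\<inverse> V\<^sub>s\<close>, \<open>V\<^sub>s V\<^sub>t = V\<^sub>s\<^sub>t\<close> and \<open>V\<^sub>s\<^sup>* = V\<^sub>s\<^sub>*\<close>; its norm closure is therefore a
  C*-algebra containing \<open>\<R>\<^sub>X\<close>. Since \<open>\<phi>\<close> and \<open>\<E>\<close> are bounded and additive, it suffices to prove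
  \<open>\<phi>(T) = \<phi>(\<E>(T))\<close> for \<open>T = M\<^sub>g V\<^sub>s\<close>. Cutting \<open>T\<close> by the projection onto the fixed points of
  \<open>\<alpha>\<^sub>s\<close> gives exactly \<open>\<E>(T)\<close>. The remaining points carry a proper 3-colouring of the graph
  \<open>x \<mapsto> \<alpha>\<^sub>s(x)\<close>, so they split into sets \<open>N\<close> with \<open>\<alpha>\<^sub>s(N) \<inter> N = \<emptyset>\<close>, and for each of them
  \<open>\<phi>(T P\<^sub>N) = \<phi>(P\<^sub>N T P\<^sub>N) = 0\<close> by the trace property.\<close>

section \<open>The sequence space \<open>\<ell>\<^sup>2\<close>\<close>

lemma L2_set_le_l2norm:
  assumes "f \<in> ell2" "finite F"
  shows "L2_set (\<lambda>x. cmod (f x)) F \<le> l2norm f"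
proof -
  have "(\<Sum>x\<in>F. (cmod (f x))^2) \<le> infsum (\<lambda>x. (cmod (f x))^2) UNIV"
    using assms by (intro finite_sum_le_infsum) (auto simp: ell2_def)
  then show ?thesis unfolding L2_set_def l2norm_def by simp
qed

lemma l2norm_leI:
  assumes "\<And>F. finite F \<Longrightarrow> L2_set (\<lambda>x. cmod (f x)) F \<le> C"
  shows "f \<in> ell2" "l2norm f \<le> C"
proof -
  have C: "0 \<le> C" using assms[of "{}"] by simp
  have sums_le: "(\<Sum>x\<in>F. (cmod (f x))^2) \<le> C^2" if "finite F" for F
  proof -
    have "sqrt (\<Sum>x\<in>F. (cmod (f x))^2) \<le> C" using assms[OF that] by (simp add: L2_set_def)
    moreover have "0 \<le> (\<Sum>x\<in>F. (cmod (f x))^2)" by (simp add: sum_nonneg)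
    ultimately show ?thesis using C by (simp add: real_sqrt_le_iff real_le_lsqrt sqrt_le_D)
  qed
  have sum: "(\<lambda>x. (cmod (f x))^2) summable_on UNIV"
    by (rule nonneg_bdd_above_summable_on) (use sums_le in \<open>auto simp: bdd_above_def\<close>)
  then show "f \<in> ell2" by (simp add: ell2_def)
  have "infsum (\<lambda>x. (cmod (f x))^2) UNIV \<le> C^2"
    by (rule infsum_le_finite_sums) (use sum sums_le in auto)
  then show "l2norm f \<le> C" unfolding l2norm_def using C
    by (simp add: real_sqrt_le_iff real_le_lsqrt sqrt_le_D real_sqrt_le_mono[of _ "C^2", simplified])
qed

lemma l2norm_nonneg [simp]: "0 \<le> l2norm f"
  unfolding l2norm_def by (simp add: infsum_nonneg)

lemma l2norm_zero [simp]: "l2norm (\<lambda>_. 0) = 0"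
  by (simp add: l2norm_def)

lemma zero_in_ell2 [simp]: "(\<lambda>_. 0) \<in> ell2"
  by (simp add: ell2_def)

lemma norm_le_l2norm: "f \<in> ell2 \<Longrightarrow> cmod (f x) \<le> l2norm f"
  using L2_set_le_l2norm[of f "{x}"] by (simp add: L2_set_def)

lemma l2norm_eq_0D: "f \<in> ell2 \<Longrightarrow> l2norm f = 0 \<Longrightarrow> f = (\<lambda>_. 0)"
  using norm_le_l2norm[of f] by fastforce

lemma l2norm_dominated:
  assumes "g \<in> ell2" "\<And>x. cmod (f x) \<le> cmod (g x)"
  shows "f \<in> ell2" "l2norm f \<le> l2norm g"
proof -
  have "L2_set (\<lambda>x. cmod (f x)) F \<le> l2norm g" if "finite F" for F
  proof -
    have "L2_set (\<lambda>x. cmod (f x)) F \<le> L2_set (\<lambda>x. cmod (g x)) F"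
      by (rule L2_set_mono) (use assms in auto)
    then show ?thesis using L2_set_le_l2norm[OF assms(1) that] by linarith
  qed
  then show "f \<in> ell2" "l2norm f \<le> l2norm g" using l2norm_leI[of f "l2norm g"] by auto
qed

lemma l2norm_add:
  assumes "f \<in> ell2" "g \<in> ell2"
  shows "(\<lambda>x. f x + g x) \<in> ell2" "l2norm (\<lambda>x. f x + g x) \<le> l2norm f + l2norm g"
proof -
  have "L2_set (\<lambda>x. cmod (f x + g x)) F \<le> l2norm f + l2norm g" if "finite F" for F
  proof -
    have "L2_set (\<lambda>x. cmod (f x + g x)) F \<le> L2_set (\<lambda>x. cmod (f x) + cmod (g x)) F"
      by (rule L2_set_mono) (auto simp: norm_triangle_ineq)
    also have "\<dots> \<le> L2_set (\<lambda>x. cmod (f x)) F + L2_set (\<lambda>x. cmod (g x)) F"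
      by (rule L2_set_triangle_ineq)
    also have "\<dots> \<le> l2norm f + l2norm g"
      using L2_set_le_l2norm[OF assms(1) that] L2_set_le_l2norm[OF assms(2) that] by simp
    finally show ?thesis .
  qed
  then show "(\<lambda>x. f x + g x) \<in> ell2" "l2norm (\<lambda>x. f x + g x) \<le> l2norm f + l2norm g"
    using l2norm_leI[of "\<lambda>x. f x + g x"] by auto
qed

lemma l2norm_scale:
  assumes "f \<in> ell2"
  shows "(\<lambda>x. c * f x) \<in> ell2" "l2norm (\<lambda>x. c * f x) = cmod c * l2norm f"
proof -
  have sum: "(\<lambda>x. (cmod (f x))^2) summable_on UNIV" using assms by (simp add: ell2_def)
  have sq: "(\<lambda>x. (cmod (c * f x))^2) = (\<lambda>x. (cmod c)^2 * (cmod (f x))^2)"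
    by (simp add: norm_mult power_mult_distrib)
  show "(\<lambda>x. c * f x) \<in> ell2"
    using summable_on_cmult_right[OF sum, of "(cmod c)^2"] sq by (simp add: ell2_def)
  have "infsum (\<lambda>x. (cmod (c * f x))^2) UNIV = (cmod c)^2 * infsum (\<lambda>x. (cmod (f x))^2) UNIV"
    unfolding sq by (rule infsum_cmult_right) (use sum in auto)
  then show "l2norm (\<lambda>x. c * f x) = cmod c * l2norm f"
    unfolding l2norm_def by (simp add: real_sqrt_mult)
qed

lemma l2norm_diff:
  assumes "f \<in> ell2" "g \<in> ell2"
  shows "(\<lambda>x. f x - g x) \<in> ell2" "l2norm (\<lambda>x. f x - g x) \<le> l2norm f + l2norm g"
proof -
  have "(\<lambda>x. (-1) * g x) \<in> ell2" "l2norm (\<lambda>x. (-1) * g x) = l2norm g"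
    using l2norm_scale[OF assms(2), of "-1"] by auto
  then show "(\<lambda>x. f x - g x) \<in> ell2" "l2norm (\<lambda>x. f x - g x) \<le> l2norm f + l2norm g"
    using l2norm_add[OF assms(1), of "\<lambda>x. (-1) * g x"] by auto
qed

lemma l2norm_diff_commute: "l2norm (\<lambda>x. f x - g x) = l2norm (\<lambda>x. g x - f x)"
  by (simp add: l2norm_def norm_minus_commute)

lemma ell2_lincomb: "f \<in> ell2 \<Longrightarrow> g \<in> ell2 \<Longrightarrow> (\<lambda>x. a * f x + b * g x) \<in> ell2"
  by (rule l2norm_add(1)[OF l2norm_scale(1) l2norm_scale(1)])

lemma l2norm_finite_support:
  assumes "finite F"
  shows "(\<lambda>x. if x \<in> F then c x else 0) \<in> ell2"
    "l2norm (\<lambda>x. if x \<in> F then c x else 0) = L2_set (\<lambda>x. cmod (c x)) F"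
proof -
  have "(\<lambda>x. (cmod (if x \<in> F then c x else 0))^2) summable_on UNIV \<longleftrightarrow> (\<lambda>x. (cmod (c x))^2) summable_on F"
    by (rule summable_on_cong_neutral) auto
  then show "(\<lambda>x. if x \<in> F then c x else 0) \<in> ell2" using assms by (simp add: ell2_def)
  have "infsum (\<lambda>x. (cmod (if x \<in> F then c x else 0))^2) UNIV = infsum (\<lambda>x. (cmod (c x))^2) F"
    by (rule infsum_cong_neutral) auto
  then show "l2norm (\<lambda>x. if x \<in> F then c x else 0) = L2_set (\<lambda>x. cmod (c x)) F"
    using assms by (simp add: l2norm_def L2_set_def)
qed

lemma l2norm_outside_le:
  assumes f: "f \<in> ell2" and F: "finite F"
  shows "l2norm (\<lambda>x. if x \<in> F then 0 else f x)
    \<le> sqrt (infsum (\<lambda>x. (cmod (f x))^2) UNIV - (\<Sum>x\<in>F. (cmod (f x))^2))"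
proof (rule l2norm_leI(2))
  define q where "q x = (cmod (f x))^2" for x
  define t where "t x = (cmod (if x \<in> F then 0 else f x))^2" for x
  fix G :: "'a set" assume G: "finite G"
  have fin: "finite (G \<union> F)" using F G by simp
  have "sum t G \<le> sum t (G \<union> F)"
    by (rule sum_mono2[OF fin]) (auto simp: t_def)
  also have "\<dots> = sum t ((G \<union> F) - F) + sum t F"
    by (rule sum.subset_diff[OF _ fin]) auto
  also have "sum t F = 0" by (rule sum.neutral) (simp add: t_def)
  also have "sum t ((G \<union> F) - F) = sum q ((G \<union> F) - F)"
    by (rule sum.cong) (auto simp: t_def q_def)
  also have "sum q ((G \<union> F) - F) = sum q (G \<union> F) - sum q F"
    using sum.subset_diff[OF _ fin, of F q] by simp
  also have "sum q (G \<union> F) \<le> infsum q UNIV"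
    using f fin by (intro finite_sum_le_infsum) (auto simp: q_def[abs_def] ell2_def)
  finally show "L2_set (\<lambda>x. cmod (if x \<in> F then 0 else f x)) G
      \<le> sqrt (infsum (\<lambda>x. (cmod (f x))^2) UNIV - (\<Sum>x\<in>F. (cmod (f x))^2))"
    unfolding L2_set_def t_def q_def by (simp add: real_sqrt_le_mono)
qed

lemma ell2_tail_small:
  assumes f: "f \<in> ell2" and \<epsilon>: "0 < \<epsilon>"
  obtains F0 where "finite F0"
    "\<And>F. finite F \<Longrightarrow> F0 \<subseteq> F \<Longrightarrow> l2norm (\<lambda>x. if x \<in> F then 0 else f x) < \<epsilon>"
proof -
  define q where "q x = (cmod (f x))^2" for x
  define S where "S = infsum q UNIV"
  have "(sum q \<longlongrightarrow> S) (finite_subsets_at_top UNIV)"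
    unfolding S_def using f by (intro infsum_tendsto) (simp add: ell2_def q_def[abs_def])
  then have "eventually (\<lambda>F. dist (sum q F) S < \<epsilon>^2) (finite_subsets_at_top UNIV)"
    using \<epsilon> by (simp add: tendsto_iff)
  then have "\<exists>F0. finite F0 \<and> F0 \<subseteq> UNIV \<and>
      (\<forall>F. finite F \<and> F0 \<subseteq> F \<and> F \<subseteq> UNIV \<longrightarrow> dist (sum q F) S < \<epsilon>^2)"
    by (simp only: eventually_finite_subsets_at_top)
  then obtain F0 where F0: "finite F0" "\<And>F. finite F \<Longrightarrow> F0 \<subseteq> F \<Longrightarrow> dist (sum q F) S < \<epsilon>^2"
    by (elim exE conjE) simp
  have "l2norm (\<lambda>x. if x \<in> F then 0 else f x) < \<epsilon>" if F: "finite F" "F0 \<subseteq> F" for F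
  proof -
    have "l2norm (\<lambda>x. if x \<in> F then 0 else f x) \<le> sqrt (S - sum q F)"
      using l2norm_outside_le[OF f F(1)] unfolding S_def q_def .
    also have "\<dots> < sqrt (\<epsilon>^2)"
      using F0(2)[OF F] by (intro real_sqrt_less_mono) (simp add: dist_real_def)
    finally show ?thesis using \<epsilon> by simp
  qed
  with F0(1) that show ?thesis by blast
qed

lemma ell2_inner_summable:
  assumes "f \<in> ell2" "g \<in> ell2"
  shows "(\<lambda>x. cnj (f x) * g x) summable_on UNIV"
    "(\<lambda>x. cmod (f x) * cmod (g x)) summable_on UNIV"
proof -
  have "(\<lambda>x. (cmod (f x))^2 + (cmod (g x))^2) summable_on UNIV"
    using assms by (intro summable_on_add) (auto simp: ell2_def)
  then have sq: "(\<lambda>x. norm ((cmod (f x))^2 + (cmod (g x))^2)) summable_on UNIV"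
    by simp
  have "norm (cnj (f x) * g x) \<le> norm ((cmod (f x))^2 + (cmod (g x))^2)" for x
  proof -
    have "0 \<le> cmod (f x) * cmod (g x)" by simp
    moreover have "norm (cnj (f x) * g x) = cmod (f x) * cmod (g x)" by (simp add: norm_mult)
    moreover have "norm ((cmod (f x))^2 + (cmod (g x))^2) = (cmod (f x))^2 + (cmod (g x))^2" by simp
    ultimately show ?thesis using sum_squares_bound[of "cmod (f x)" "cmod (g x)"] by linarith
  qed
  then have "(\<lambda>x. norm (cnj (f x) * g x)) summable_on UNIV"
    by (rule Infinite_Sum.abs_summable_on_comparison_test[OF sq])
  then show "(\<lambda>x. cnj (f x) * g x) summable_on UNIV"
    "(\<lambda>x. cmod (f x) * cmod (g x)) summable_on UNIV"
    by (auto intro: abs_summable_summable simp: norm_mult)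
qed

lemma l2inner_cauchy_schwarz:
  assumes "f \<in> ell2" "g \<in> ell2"
  shows "cmod (l2inner f g) \<le> l2norm f * l2norm g"
proof -
  note sum = ell2_inner_summable[OF assms]
  have "cmod (l2inner f g) \<le> infsum (\<lambda>x. cmod (f x) * cmod (g x)) UNIV"
    unfolding l2inner_def
    by (rule norm_infsum_le[OF has_sum_infsum[OF sum(1)] has_sum_infsum[OF sum(2)]]) (simp add: norm_mult)
  also have "\<dots> \<le> l2norm f * l2norm g"
  proof (rule infsum_le_finite_sums[OF sum(2)])
    fix F :: "'a set" assume F: "finite F"
    have "(\<Sum>x\<in>F. cmod (f x) * cmod (g x)) \<le> L2_set (\<lambda>x. cmod (f x)) F * L2_set (\<lambda>x. cmod (g x)) F"
      using L2_set_mult_ineq[of "\<lambda>x. cmod (f x)" "\<lambda>x. cmod (g x)" F] by simp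
    also have "\<dots> \<le> l2norm f * l2norm g"
      by (intro mult_mono L2_set_le_l2norm assms F) auto
    finally show "(\<Sum>x\<in>F. cmod (f x) * cmod (g x)) \<le> l2norm f * l2norm g" .
  qed
  finally show ?thesis .
qed

lemma l2inner_linear_right:
  assumes "f \<in> ell2" "g \<in> ell2" "h \<in> ell2"
  shows "l2inner f (\<lambda>x. a * g x + b * h x) = a * l2inner f g + b * l2inner f h"
proof -
  have eq: "(\<lambda>x. cnj (f x) * (a * g x + b * h x)) = (\<lambda>x. a * (cnj (f x) * g x) + b * (cnj (f x) * h x))"
    by (rule ext) (simp add: distrib_left mult.left_commute)
  have "(\<lambda>x. a * (cnj (f x) * g x)) summable_on UNIV" "(\<lambda>x. b * (cnj (f x) * h x)) summable_on UNIV"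
    by (intro summable_on_cmult_right ell2_inner_summable(1) assms)+
  then show ?thesis unfolding l2inner_def eq by (simp add: infsum_add infsum_cmult_right')
qed

lemma l2inner_linear_left:
  assumes "f \<in> ell2" "g \<in> ell2" "h \<in> ell2"
  shows "l2inner (\<lambda>x. a * f x + b * g x) h = cnj a * l2inner f h + cnj b * l2inner g h"
proof -
  have eq: "(\<lambda>x. cnj (a * f x + b * g x) * h x) = (\<lambda>x. cnj a * (cnj (f x) * h x) + cnj b * (cnj (g x) * h x))"
    by (rule ext) (simp add: distrib_right mult.assoc)
  have "(\<lambda>x. cnj a * (cnj (f x) * h x)) summable_on UNIV" "(\<lambda>x. cnj b * (cnj (g x) * h x)) summable_on UNIV"
    by (intro summable_on_cmult_right ell2_inner_summable(1) assms)+
  then show ?thesis unfolding l2inner_def eq by (simp add: infsum_add infsum_cmult_right')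
qed

lemma l2inner_diff_left:
  assumes "f \<in> ell2" "g \<in> ell2" "h \<in> ell2"
  shows "l2inner (\<lambda>x. f x - g x) h = l2inner f h - l2inner g h"
  using l2inner_linear_left[OF assms, of 1 "-1"] by simp

lemma l2inner_single_left: "l2inner (\<lambda>y. if y = x then c else 0) g = cnj c * g x"
proof -
  have "l2inner (\<lambda>y. if y = x then c else 0) g = infsum (\<lambda>y. cnj (if y = x then c else 0) * g y) {x}"
    unfolding l2inner_def by (rule infsum_cong_neutral) auto
  then show ?thesis by simp
qed

section \<open>Bounded operators\<close>

lemma is_bounded_opI:
  assumes "\<And>f. f \<notin> ell2 \<Longrightarrow> T f = (\<lambda>_. 0)"
    and "\<And>f g a b. f \<in> ell2 \<Longrightarrow> g \<in> ell2 \<Longrightarrow> T (\<lambda>x. a * f x + b * g x) = (\<lambda>x. a * T f x + b * T g x)"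
    and "\<And>f. f \<in> ell2 \<Longrightarrow> T f \<in> ell2 \<and> l2norm (T f) \<le> K * l2norm f"
  shows "is_bounded_op T"
  unfolding is_bounded_op_def using assms by blast

lemma bounded_op_outside: "is_bounded_op T \<Longrightarrow> f \<notin> ell2 \<Longrightarrow> T f = (\<lambda>_. 0)"
  unfolding is_bounded_op_def by blast

lemma bounded_op_ell2: "is_bounded_op T \<Longrightarrow> f \<in> ell2 \<Longrightarrow> T f \<in> ell2"
  unfolding is_bounded_op_def by blast

lemma bounded_op_linear: "is_bounded_op T \<Longrightarrow> f \<in> ell2 \<Longrightarrow> g \<in> ell2 \<Longrightarrow>
    T (\<lambda>x. a * f x + b * g x) = (\<lambda>x. a * T f x + b * T g x)"
  unfolding is_bounded_op_def by blast

lemma bounded_op_zero: "is_bounded_op T \<Longrightarrow> T (\<lambda>_. 0) = (\<lambda>_. 0)"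
  using bounded_op_linear[of T "\<lambda>_. 0" "\<lambda>_. 0" 0 0] by simp

lemma bounded_op_scale: "is_bounded_op T \<Longrightarrow> f \<in> ell2 \<Longrightarrow> T (\<lambda>x. c * f x) = (\<lambda>x. c * T f x)"
  using bounded_op_linear[of T f f c 0] by simp

lemma bounded_op_add: "is_bounded_op T \<Longrightarrow> f \<in> ell2 \<Longrightarrow> g \<in> ell2 \<Longrightarrow>
    T (\<lambda>x. f x + g x) = (\<lambda>x. T f x + T g x)"
  using bounded_op_linear[of T f g 1 1] by simp

lemma bounded_op_diff: "is_bounded_op T \<Longrightarrow> f \<in> ell2 \<Longrightarrow> g \<in> ell2 \<Longrightarrow>
    T (\<lambda>x. f x - g x) = (\<lambda>x. T f x - T g x)"
  using bounded_op_linear[of T f g 1 "-1"] by simp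

lemma bounded_op_bound:
  assumes "is_bounded_op T"
  obtains K where "0 \<le> K" "\<And>f. f \<in> ell2 \<Longrightarrow> l2norm (T f) \<le> K * l2norm f"
proof -
  obtain K where K: "\<forall>f\<in>ell2. l2norm (T f) \<le> K * l2norm f"
    using assms unfolding is_bounded_op_def by blast
  have "l2norm (T f) \<le> max K 0 * l2norm f" if "f \<in> ell2" for f
    using K that mult_right_mono[of K "max K 0" "l2norm f"] by force
  with that show ?thesis by (meson max.cobounded2)
qed

lemma opnorm_bdd_above:
  assumes "is_bounded_op T"
  shows "bdd_above {l2norm (T f) | f. f \<in> ell2 \<and> l2norm f \<le> 1}"
proof -
  obtain K where K: "0 \<le> K" "\<And>f. f \<in> ell2 \<Longrightarrow> l2norm (T f) \<le> K * l2norm f"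
    using bounded_op_bound[OF assms] by blast
  have "l2norm (T f) \<le> K" if "f \<in> ell2" "l2norm f \<le> 1" for f
    using K(2)[OF that(1)] mult_left_mono[OF that(2) K(1)] by simp
  then show ?thesis by (intro bdd_aboveI[where M=K]) blast
qed

lemma opnorm_nonneg:
  assumes "is_bounded_op T"
  shows "0 \<le> opnorm T"
proof -
  have "l2norm (T (\<lambda>_. 0)) \<in> {l2norm (T f) | f. f \<in> ell2 \<and> l2norm f \<le> 1}" by force
  then have "l2norm (T (\<lambda>_. 0)) \<le> opnorm T"
    unfolding opnorm_def by (rule cSup_upper[OF _ opnorm_bdd_above[OF assms]])
  then show ?thesis using bounded_op_zero[OF assms] by simp
qed

lemma opnorm_bound:
  assumes T: "is_bounded_op T" and f: "f \<in> ell2"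
  shows "l2norm (T f) \<le> opnorm T * l2norm f"
proof (cases "l2norm f = 0")
  case True
  then show ?thesis using l2norm_eq_0D[OF f] bounded_op_zero[OF T] opnorm_nonneg[OF T] by simp
next
  case False
  define r where "r = 1 / l2norm f"
  have "0 < l2norm f" using False l2norm_nonneg[of f] by linarith
  then have r: "0 < r" unfolding r_def by simp
  have "l2norm (\<lambda>x. complex_of_real r * f x) = 1"
    using l2norm_scale(2)[OF f, of "complex_of_real r"] r False by (simp add: r_def norm_divide)
  then have "l2norm (T (\<lambda>x. complex_of_real r * f x)) \<le> opnorm T"
    unfolding opnorm_def using l2norm_scale(1)[OF f]
    by (intro cSup_upper[OF _ opnorm_bdd_above[OF T]]) auto
  moreover have "l2norm (T (\<lambda>x. complex_of_real r * f x)) = r * l2norm (T f)"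
    using bounded_op_scale[OF T f] l2norm_scale(2)[OF bounded_op_ell2[OF T f]] r by simp
  ultimately have "l2norm (T f) / l2norm f \<le> opnorm T" by (simp add: r_def)
  then show ?thesis using \<open>0 < l2norm f\<close> by (simp add: divide_le_eq mult.commute)
qed

lemma opnorm_leI:
  assumes T: "is_bounded_op T" and C: "0 \<le> C"
    and bound: "\<And>f. f \<in> ell2 \<Longrightarrow> l2norm (T f) \<le> C * l2norm f"
  shows "opnorm T \<le> C"
  unfolding opnorm_def
proof (rule cSup_least)
  have "l2norm (T (\<lambda>_. 0)) \<in> {l2norm (T f) |f. f \<in> ell2 \<and> l2norm f \<le> 1}" by force
  then show "{l2norm (T f) |f. f \<in> ell2 \<and> l2norm f \<le> 1} \<noteq> {}" by blast
  fix y assume "y \<in> {l2norm (T f) |f. f \<in> ell2 \<and> l2norm f \<le> 1}"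
  then obtain f where "y = l2norm (T f)" "f \<in> ell2" "l2norm f \<le> 1" by blast
  then show "y \<le> C" using bound[of f] mult_left_mono[of "l2norm f" 1 C] C by simp
qed

lemma bounded_op_plus:
  assumes A: "is_bounded_op A" and B: "is_bounded_op B"
  shows "is_bounded_op (op_plus A B)" "opnorm (op_plus A B) \<le> opnorm A + opnorm B"
proof -
  have bound: "op_plus A B f \<in> ell2 \<and> l2norm (op_plus A B f) \<le> (opnorm A + opnorm B) * l2norm f"
    if f: "f \<in> ell2" for f
    using l2norm_add[OF bounded_op_ell2[OF A f] bounded_op_ell2[OF B f]]
      opnorm_bound[OF A f] opnorm_bound[OF B f]
    unfolding op_plus_def by (simp add: distrib_right)
  show bdd: "is_bounded_op (op_plus A B)"
  proof (rule is_bounded_opI[OF _ _ bound])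
    show "op_plus A B f = (\<lambda>_. 0)" if "f \<notin> ell2" for f
      using that unfolding op_plus_def by (simp add: bounded_op_outside[OF A] bounded_op_outside[OF B])
    show "op_plus A B (\<lambda>x. a * f x + b * g x) = (\<lambda>x. a * op_plus A B f x + b * op_plus A B g x)"
      if "f \<in> ell2" "g \<in> ell2" for f g a b
      unfolding op_plus_def bounded_op_linear[OF A that] bounded_op_linear[OF B that]
      by (simp add: algebra_simps)
  qed
  show "opnorm (op_plus A B) \<le> opnorm A + opnorm B"
    using bound opnorm_nonneg[OF A] opnorm_nonneg[OF B] by (intro opnorm_leI[OF bdd]) auto
qed

lemma bounded_op_op_scale:
  assumes A: "is_bounded_op A"
  shows "is_bounded_op (op_scale c A)" "opnorm (op_scale c A) \<le> cmod c * opnorm A"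
proof -
  have bound: "op_scale c A f \<in> ell2 \<and> l2norm (op_scale c A f) \<le> (cmod c * opnorm A) * l2norm f"
    if f: "f \<in> ell2" for f
    using l2norm_scale[OF bounded_op_ell2[OF A f], of c] opnorm_bound[OF A f]
      mult_left_mono[of _ _ "cmod c"]
    unfolding op_scale_def by (simp add: mult.assoc)
  show bdd: "is_bounded_op (op_scale c A)"
  proof (rule is_bounded_opI[OF _ _ bound])
    show "op_scale c A f = (\<lambda>_. 0)" if "f \<notin> ell2" for f
      using that unfolding op_scale_def by (simp add: bounded_op_outside[OF A])
    show "op_scale c A (\<lambda>x. a * f x + b * g x) = (\<lambda>x. a * op_scale c A f x + b * op_scale c A g x)"
      if "f \<in> ell2" "g \<in> ell2" for f g a b
      unfolding op_scale_def bounded_op_linear[OF A that] by (simp add: algebra_simps)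
  qed
  show "opnorm (op_scale c A) \<le> cmod c * opnorm A"
    using bound opnorm_nonneg[OF A] by (intro opnorm_leI[OF bdd]) auto
qed

lemma op_minus_eq_plus_scale: "op_minus A B = op_plus A (op_scale (-1) B)"
  unfolding op_minus_def op_plus_def op_scale_def by simp

lemma bounded_op_minus:
  assumes A: "is_bounded_op A" and B: "is_bounded_op B"
  shows "is_bounded_op (op_minus A B)" "opnorm (op_minus A B) \<le> opnorm A + opnorm B"
  using bounded_op_plus[OF A bounded_op_op_scale(1)[OF B, of "-1"]] bounded_op_op_scale(2)[OF B, of "-1"]
  unfolding op_minus_eq_plus_scale by auto

lemma bounded_op_comp:
  assumes A: "is_bounded_op A" and B: "is_bounded_op B"
  shows "is_bounded_op (A \<circ> B)" "opnorm (A \<circ> B) \<le> opnorm A * opnorm B"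
proof -
  have bound: "(A \<circ> B) f \<in> ell2 \<and> l2norm ((A \<circ> B) f) \<le> (opnorm A * opnorm B) * l2norm f"
    if f: "f \<in> ell2" for f
    using opnorm_bound[OF A bounded_op_ell2[OF B f]] opnorm_bound[OF B f] opnorm_nonneg[OF A]
      mult_left_mono[of "l2norm (B f)" _ "opnorm A"] bounded_op_ell2[OF A bounded_op_ell2[OF B f]]
    by (simp add: mult.assoc) (meson order_trans)
  show bdd: "is_bounded_op (A \<circ> B)"
  proof (rule is_bounded_opI[OF _ _ bound])
    show "(A \<circ> B) f = (\<lambda>_. 0)" if "f \<notin> ell2" for f
      using that bounded_op_outside[OF B] bounded_op_zero[OF A] by simp
    show "(A \<circ> B) (\<lambda>x. a * f x + b * g x) = (\<lambda>x. a * (A \<circ> B) f x + b * (A \<circ> B) g x)"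
      if "f \<in> ell2" "g \<in> ell2" for f g a b
      using bounded_op_linear[OF B that] bounded_op_linear[OF A bounded_op_ell2[OF B that(1)] bounded_op_ell2[OF B that(2)]]
      by simp
  qed
  show "opnorm (A \<circ> B) \<le> opnorm A * opnorm B"
    using bound opnorm_nonneg[OF A] opnorm_nonneg[OF B] by (intro opnorm_leI[OF bdd]) auto
qed

definition zero_op :: "'x op" where "zero_op = (\<lambda>f x. 0)"

lemma op_minus_self: "op_minus A A = zero_op"
  unfolding op_minus_def zero_op_def by simp

lemma opnorm_zero_op: "opnorm (zero_op :: 'x op) = 0"
proof -
  have bdd: "is_bounded_op (zero_op :: 'x op)"
    by (rule is_bounded_opI[where K=0]) (auto simp: zero_op_def)
  have "opnorm (zero_op :: 'x op) \<le> 0"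
    by (rule opnorm_leI[OF bdd order.refl]) (simp add: zero_op_def)
  then show ?thesis using opnorm_nonneg[OF bdd] by linarith
qed

lemma comp_op_plus_right:
  assumes A: "is_bounded_op A" and B: "is_bounded_op B" and C: "is_bounded_op C"
  shows "A \<circ> op_plus B C = op_plus (A \<circ> B) (A \<circ> C)"
proof
  fix f
  show "(A \<circ> op_plus B C) f = op_plus (A \<circ> B) (A \<circ> C) f"
    using bounded_op_add[OF A bounded_op_ell2[OF B] bounded_op_ell2[OF C], of f f]
      bounded_op_outside[OF B, of f] bounded_op_outside[OF C, of f] bounded_op_zero[OF A]
    by (cases "f \<in> ell2") (simp_all add: op_plus_def)
qed

lemma comp_op_minus_right:
  assumes A: "is_bounded_op A" and B: "is_bounded_op B" and C: "is_bounded_op C"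
  shows "A \<circ> op_minus B C = op_minus (A \<circ> B) (A \<circ> C)"
proof
  fix f
  show "(A \<circ> op_minus B C) f = op_minus (A \<circ> B) (A \<circ> C) f"
    using bounded_op_diff[OF A bounded_op_ell2[OF B] bounded_op_ell2[OF C], of f f]
      bounded_op_outside[OF B, of f] bounded_op_outside[OF C, of f] bounded_op_zero[OF A]
    by (cases "f \<in> ell2") (simp_all add: op_minus_def)
qed

lemma comp_op_plus_left: "op_plus A B \<circ> C = op_plus (A \<circ> C) (B \<circ> C)"
  unfolding op_plus_def comp_def ..

lemma op_scale_op_plus: "op_scale c (op_plus A B) = op_plus (op_scale c A) (op_scale c B)"
  unfolding op_plus_def op_scale_def by (simp add: distrib_left)

lemma op_scale_comp: "op_scale c (A \<circ> B) = op_scale c A \<circ> B"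
  unfolding op_scale_def comp_def ..

section \<open>Adjoints\<close>

definition delta :: "'x \<Rightarrow> 'x vec" where "delta x = (\<lambda>y. if y = x then 1 else 0)"

lemma delta_ell2: "delta x \<in> ell2" "l2norm (delta x) = 1"
proof -
  have eq: "delta x = (\<lambda>y. if y \<in> {x} then 1 else 0)" unfolding delta_def by auto
  show "delta x \<in> ell2" "l2norm (delta x) = 1"
    unfolding eq using l2norm_finite_support[of "{x}" "\<lambda>_. 1"] by (auto simp: L2_set_def)
qed

lemma l2inner_bounded_op_finite_support:
  assumes T: "is_bounded_op T" and g: "g \<in> ell2" and F: "finite F"
  shows "l2inner (T (\<lambda>y. if y \<in> F then c y else 0)) g = (\<Sum>x\<in>F. cnj (c x) * l2inner (T (delta x)) g)"
  using F
proof (induction F rule: finite_induct)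
  case empty
  then show ?case using bounded_op_zero[OF T] by (simp add: l2inner_def)
next
  case (insert a F)
  define u where "u = (\<lambda>y. if y \<in> F then c y else 0)"
  have u: "u \<in> ell2" unfolding u_def by (rule l2norm_finite_support(1)[OF insert(1)])
  have "(\<lambda>y. if y \<in> insert a F then c y else 0) = (\<lambda>y. 1 * u y + c a * delta a y)"
    using insert(2) by (auto simp: delta_def u_def)
  then have "T (\<lambda>y. if y \<in> insert a F then c y else 0) = (\<lambda>y. 1 * T u y + c a * T (delta a) y)"
    using bounded_op_linear[OF T u delta_ell2(1), of 1 "c a"] by simp
  then show ?case
    using l2inner_linear_left[OF bounded_op_ell2[OF T u] bounded_op_ell2[OF T delta_ell2(1)] g, of 1 "c a"]
      insert by (simp add: u_def add.commute)
qed

text \<open>The adjoint is given explicitly by its matrix coefficients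
  \<open>(T\<^sup>* g) x = \<langle>T \<delta>\<^sub>x, g\<rangle>\<close>; this avoids any appeal to the Riesz representation theorem.\<close>
definition adjoint_op :: "'x op \<Rightarrow> 'x op" where
  "adjoint_op T g = (if g \<in> ell2 then (\<lambda>x. l2inner (T (delta x)) g) else (\<lambda>_. 0))"

lemma adjoint_op_bound:
  assumes T: "is_bounded_op T" and g: "g \<in> ell2"
  shows "adjoint_op T g \<in> ell2" "l2norm (adjoint_op T g) \<le> opnorm T * l2norm g"
proof -
  define c where "c = adjoint_op T g"
  have c: "c x = l2inner (T (delta x)) g" for x unfolding c_def adjoint_op_def using g by simp
  have "L2_set (\<lambda>x. cmod (c x)) F \<le> opnorm T * l2norm g" if F: "finite F" for F
  proof -
    define u where "u = (\<lambda>y. if y \<in> F then c y else 0)"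
    define L where "L = L2_set (\<lambda>x. cmod (c x)) F"
    have u: "u \<in> ell2" "l2norm u = L" unfolding u_def L_def using l2norm_finite_support[OF F] by auto
    have "l2inner (T u) g = (\<Sum>x\<in>F. cnj (c x) * c x)"
      unfolding u_def l2inner_bounded_op_finite_support[OF T g F] c ..
    also have "\<dots> = complex_of_real (\<Sum>x\<in>F. (cmod (c x))^2)"
      unfolding of_real_sum by (rule sum.cong[OF refl]) (simp only: complex_norm_square mult.commute)
    also have "(\<Sum>x\<in>F. (cmod (c x))^2) = L^2"
      unfolding L_def L2_set_def by (simp add: sum_nonneg)
    finally have "L^2 = cmod (l2inner (T u) g)" by (simp only: norm_of_real abs_power2)
    also have "\<dots> \<le> l2norm (T u) * l2norm g"
      by (rule l2inner_cauchy_schwarz[OF bounded_op_ell2[OF T u(1)] g])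
    also have "\<dots> \<le> (opnorm T * L) * l2norm g"
      using opnorm_bound[OF T u(1)] u(2) by (intro mult_right_mono) auto
    finally have "L * L \<le> L * (opnorm T * l2norm g)" by (simp add: power2_eq_square algebra_simps)
    moreover have "0 \<le> L" unfolding L_def by simp
    ultimately show ?thesis
      using opnorm_nonneg[OF T] unfolding L_def[symmetric]
      by (cases "L = 0") (simp_all add: mult_le_cancel_left_pos)
  qed
  then show "adjoint_op T g \<in> ell2" "l2norm (adjoint_op T g) \<le> opnorm T * l2norm g"
    using l2norm_leI[of c] unfolding c_def by auto
qed

lemma complex_eq_0_if_small:
  fixes z :: complex
  assumes "0 \<le> M" and "\<And>\<epsilon>. 0 < \<epsilon> \<Longrightarrow> cmod z \<le> \<epsilon> * M"
  shows "z = 0"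
proof -
  have "cmod z \<le> 0 + \<epsilon>" if "0 < \<epsilon>" for \<epsilon>
  proof -
    have "cmod z \<le> (\<epsilon> / (M + 1)) * M" using assms(2)[of "\<epsilon> / (M + 1)"] that assms(1) by simp
    also have "\<dots> \<le> \<epsilon>" using that assms(1) by (simp add: field_simps)
    finally show ?thesis by simp
  qed
  then show ?thesis using field_le_epsilon[of "cmod z" 0] by simp
qed

lemma l2inner_adjoint_op_finite_support:
  assumes T: "is_bounded_op T" and g: "g \<in> ell2" and F: "finite F"
  shows "l2inner (T (\<lambda>y. if y \<in> F then f y else 0)) g
    = l2inner (\<lambda>y. if y \<in> F then f y else 0) (adjoint_op T g)"
proof -
  have "l2inner (T (\<lambda>y. if y \<in> F then f y else 0)) g = (\<Sum>x\<in>F. cnj (f x) * adjoint_op T g x)"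
    unfolding l2inner_bounded_op_finite_support[OF T g F] using g by (simp add: adjoint_op_def)
  also have "\<dots> = l2inner (\<lambda>y. if y \<in> F then f y else 0) (adjoint_op T g)"
    unfolding l2inner_def
    using F by (subst infsum_cong_neutral[where T=F and g="\<lambda>x. cnj (f x) * adjoint_op T g x"]) auto
  finally show ?thesis .
qed

text \<open>The adjoint identity is checked on finitely supported vectors and extended by
  approximating \<open>f\<close> up to an \<open>\<epsilon>\<close>-small tail.\<close>
lemma l2inner_adjoint_op:
  assumes T: "is_bounded_op T" and f: "f \<in> ell2" and g: "g \<in> ell2"
  shows "l2inner (T f) g = l2inner f (adjoint_op T g)"
proof -
  define c where "c = adjoint_op T g"
  have c: "c \<in> ell2" unfolding c_def by (rule adjoint_op_bound(1)[OF T g])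
  define M where "M = opnorm T * l2norm g + l2norm c"
  have M: "0 \<le> M" unfolding M_def using opnorm_nonneg[OF T] by simp
  have "cmod (l2inner (T f) g - l2inner f c) \<le> \<epsilon> * M" if \<epsilon>: "0 < \<epsilon>" for \<epsilon>
  proof -
    obtain F where F: "finite F"
      and tail_small: "\<And>F'. finite F' \<Longrightarrow> F \<subseteq> F' \<Longrightarrow> l2norm (\<lambda>x. if x \<in> F' then 0 else f x) < \<epsilon>"
      using ell2_tail_small[OF f \<epsilon>] by blast
    note small = tail_small[OF F order.refl]
    define head where "head = (\<lambda>y. if y \<in> F then f y else 0)"
    define tail where "tail = (\<lambda>x. f x - head x)"
    have head: "head \<in> ell2" unfolding head_def by (rule l2norm_finite_support(1)[OF F])
    have tail: "tail \<in> ell2" "l2norm tail < \<epsilon>"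
      using l2norm_diff(1)[OF f head] small unfolding tail_def head_def
      by (simp_all add: if_distrib[of "\<lambda>y. f _ - y"] cong: if_cong)
    have head_eq: "l2inner (T head) g = l2inner head c"
      unfolding head_def c_def by (rule l2inner_adjoint_op_finite_support[OF T g F])
    have "l2inner (T f) g - l2inner f c = l2inner (T tail) g - l2inner tail c"
      using bounded_op_diff[OF T f head] head_eq
        l2inner_diff_left[OF bounded_op_ell2[OF T f] bounded_op_ell2[OF T head] g]
        l2inner_diff_left[OF f head c]
      unfolding tail_def by simp
    also have "cmod \<dots> \<le> l2norm (T tail) * l2norm g + l2norm tail * l2norm c"
      using norm_triangle_ineq4[of "l2inner (T tail) g" "l2inner tail c"]
        l2inner_cauchy_schwarz[OF bounded_op_ell2[OF T tail(1)] g] l2inner_cauchy_schwarz[OF tail(1) c]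
      by linarith
    also have "\<dots> \<le> (opnorm T * l2norm tail) * l2norm g + l2norm tail * l2norm c"
      by (intro add_mono mult_right_mono opnorm_bound[OF T tail(1)]) auto
    also have "\<dots> = l2norm tail * M" unfolding M_def by (simp add: algebra_simps)
    also have "\<dots> \<le> \<epsilon> * M" using tail(2) M by (intro mult_right_mono) auto
    finally show ?thesis .
  qed
  then have "l2inner (T f) g - l2inner f c = 0" by (rule complex_eq_0_if_small[OF M])
  then show ?thesis unfolding c_def by simp
qed

lemma bounded_op_adjoint_op:
  assumes T: "is_bounded_op T"
  shows "is_bounded_op (adjoint_op T)" "opnorm (adjoint_op T) \<le> opnorm T"
proof -
  show bdd: "is_bounded_op (adjoint_op T)"
  proof (rule is_bounded_opI)
    show "adjoint_op T f = (\<lambda>_. 0)" if "f \<notin> ell2" for f using that by (simp add: adjoint_op_def)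
    show "adjoint_op T (\<lambda>x. a * f x + b * g x) = (\<lambda>x. a * adjoint_op T f x + b * adjoint_op T g x)"
      if "f \<in> ell2" "g \<in> ell2" for f g a b
      using that ell2_lincomb[OF that, of a b]
      by (simp add: adjoint_op_def l2inner_linear_right[OF bounded_op_ell2[OF T delta_ell2(1)]])
    show "adjoint_op T f \<in> ell2 \<and> l2norm (adjoint_op T f) \<le> opnorm T * l2norm f" if "f \<in> ell2" for f
      using adjoint_op_bound[OF T that] by simp
  qed
  show "opnorm (adjoint_op T) \<le> opnorm T"
    by (rule opnorm_leI[OF bdd opnorm_nonneg[OF T]]) (rule adjoint_op_bound(2)[OF T])
qed

lemma adj_eq_adjoint_op:
  assumes T: "is_bounded_op T"
  shows "adj T = adjoint_op T"
proof -
  let ?P = "\<lambda>T'. is_bounded_op T' \<and> (\<forall>f\<in>ell2. \<forall>g\<in>ell2. l2inner (T f) g = l2inner f (T' g))"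
  have "?P (adjoint_op T)" using bounded_op_adjoint_op(1)[OF T] l2inner_adjoint_op[OF T] by blast
  then have P: "?P (adj T)" unfolding adj_def by (rule someI[where P="?P"])
  show ?thesis
  proof (intro ext)
    fix g x
    show "adj T g x = adjoint_op T g x"
    proof (cases "g \<in> ell2")
      case False then show ?thesis using P bounded_op_outside[of "adj T" g] by (simp add: adjoint_op_def)
    next
      case True
      have "adj T g x = l2inner (delta x) (adj T g)" unfolding delta_def l2inner_single_left by simp
      also have "\<dots> = l2inner (T (delta x)) g" using P delta_ell2(1) True by metis
      finally show ?thesis using True by (simp add: adjoint_op_def)
    qed
  qed
qed

lemma adjoint_op_plus:
  assumes "is_bounded_op T" "is_bounded_op B"
  shows "adjoint_op (op_plus T B) = op_plus (adjoint_op T) (adjoint_op B)"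
proof (intro ext)
  fix g x
  show "adjoint_op (op_plus T B) g x = op_plus (adjoint_op T) (adjoint_op B) g x"
    using l2inner_linear_left[OF bounded_op_ell2[OF assms(1) delta_ell2(1)[of x]]
        bounded_op_ell2[OF assms(2) delta_ell2(1)[of x]], of g 1 1]
    by (cases "g \<in> ell2") (simp_all add: adjoint_op_def op_plus_def)
qed

lemma adjoint_op_minus:
  assumes "is_bounded_op T" "is_bounded_op B"
  shows "adjoint_op (op_minus T B) = op_minus (adjoint_op T) (adjoint_op B)"
proof (intro ext)
  fix g x
  show "adjoint_op (op_minus T B) g x = op_minus (adjoint_op T) (adjoint_op B) g x"
    using l2inner_diff_left[OF bounded_op_ell2[OF assms(1) delta_ell2(1)[of x]]
        bounded_op_ell2[OF assms(2) delta_ell2(1)[of x]], of g]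
    by (cases "g \<in> ell2") (simp_all add: adjoint_op_def op_minus_def)
qed

section \<open>Multiplication operators and partial shifts\<close>

lemma linfty_bound:
  assumes "g \<in> linfty"
  obtains K where "0 \<le> K" "\<And>x. cmod (g x) \<le> K"
proof -
  obtain K where K: "\<forall>x. cmod (g x) \<le> K" using assms unfolding linfty_def by blast
  then have "0 \<le> K" using norm_ge_zero order_trans by blast
  with K that show ?thesis by blast
qed

lemma linfty_mult: "g \<in> linfty \<Longrightarrow> h \<in> linfty \<Longrightarrow> (\<lambda>x. g x * h x) \<in> linfty"
proof -
  assume "g \<in> linfty" "h \<in> linfty"
  then obtain K L where "0 \<le> K" "\<And>x. cmod (g x) \<le> K" "0 \<le> L" "\<And>x. cmod (h x) \<le> L"
    by (metis linfty_bound)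
  then have "cmod (g x * h x) \<le> K * L" for x unfolding norm_mult by (intro mult_mono) auto
  then show ?thesis unfolding linfty_def by blast
qed

lemma linfty_const: "(\<lambda>_. c) \<in> linfty"
  unfolding linfty_def by blast

lemma linfty_indicator: "(indicator A :: 'x \<Rightarrow> complex) \<in> linfty"
  unfolding linfty_def by (rule CollectI, rule exI[of _ 1]) (simp add: indicator_def)

lemma mult_op_apply: "f \<in> ell2 \<Longrightarrow> mult_op g f = (\<lambda>x. g x * f x)"
  unfolding mult_op_def by simp

lemma mult_op_outside: "f \<notin> ell2 \<Longrightarrow> mult_op g f = (\<lambda>_. 0)"
  unfolding mult_op_def by simp

lemma mult_op_l2norm_le:
  assumes g: "\<And>x. cmod (g x) \<le> K" and f: "f \<in> ell2"
  shows "mult_op g f \<in> ell2" "l2norm (mult_op g f) \<le> K * l2norm f"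
proof -
  have K: "0 \<le> K" using g norm_ge_zero order_trans by blast
  have dom: "cmod (g x * f x) \<le> cmod (complex_of_real K * f x)" for x
    using g[of x] K by (simp add: norm_mult mult_right_mono)
  show "mult_op g f \<in> ell2" "l2norm (mult_op g f) \<le> K * l2norm f"
    using l2norm_dominated[OF l2norm_scale(1)[OF f] dom] l2norm_scale(2)[OF f, of "complex_of_real K"] K
    unfolding mult_op_apply[OF f] by simp_all
qed

lemma bounded_op_mult_op:
  assumes "g \<in> linfty"
  shows "is_bounded_op (mult_op g)"
proof -
  obtain K where K: "\<And>x. cmod (g x) \<le> K" using linfty_bound[OF assms] by blast
  show ?thesis
  proof (rule is_bounded_opI)
    show "mult_op g f = (\<lambda>_. 0)" if "f \<notin> ell2" for f by (rule mult_op_outside[OF that])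
    show "mult_op g (\<lambda>x. a * f x + b * h x) = (\<lambda>x. a * mult_op g f x + b * mult_op g h x)"
      if "f \<in> ell2" "h \<in> ell2" for f h a b
      using that ell2_lincomb[OF that] by (simp add: mult_op_apply algebra_simps)
    show "mult_op g f \<in> ell2 \<and> l2norm (mult_op g f) \<le> K * l2norm f" if "f \<in> ell2" for f
      using mult_op_l2norm_le[OF K that] by simp
  qed
qed

lemma opnorm_mult_op_le:
  assumes "g \<in> linfty" "0 \<le> K" "\<And>x. cmod (g x) \<le> K"
  shows "opnorm (mult_op g) \<le> K"
  using mult_op_l2norm_le(2)[OF assms(3)] by (rule opnorm_leI[OF bounded_op_mult_op[OF assms(1)] assms(2)])

lemma mult_op_comp:
  assumes "h \<in> linfty"
  shows "mult_op g \<circ> mult_op h = mult_op (\<lambda>x. g x * h x)"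
proof
  fix f
  show "(mult_op g \<circ> mult_op h) f = mult_op (\<lambda>x. g x * h x) f"
    using bounded_op_ell2[OF bounded_op_mult_op[OF assms], of f]
    by (cases "f \<in> ell2") (simp_all add: mult_op_apply mult_op_outside mult.assoc)
qed

lemma mult_op_plus: "mult_op (\<lambda>x. g x + h x) = op_plus (mult_op g) (mult_op h)"
  unfolding mult_op_def op_plus_def by (intro ext) (simp add: distrib_right)

lemma mult_op_diff: "mult_op (\<lambda>x. g x - h x) = op_minus (mult_op g) (mult_op h)"
  unfolding mult_op_def op_minus_def by (intro ext) (simp add: left_diff_distrib)

lemma op_scale_mult_op: "op_scale c (mult_op g) = mult_op (\<lambda>x. c * g x)"
  unfolding op_scale_def mult_op_def by (intro ext) (simp add: mult.assoc)

lemma mult_op_indicator_idem: "mult_op (indicator (A :: 'x set)) \<circ> mult_op (indicator A) = mult_op (indicator A)"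
proof -
  have "(\<lambda>x. indicator A x * indicator A x) = (indicator A :: 'x \<Rightarrow> complex)"
    by (simp add: fun_eq_iff indicator_def)
  then show ?thesis using mult_op_comp[OF linfty_indicator, of "indicator A" A] by simp
qed

lemma comp_mult_op_indicator_split:
  assumes "is_bounded_op T"
  shows "T \<circ> mult_op (indicator A) =
    op_plus (T \<circ> mult_op (indicator (A \<inter> B))) (T \<circ> mult_op (indicator (A - B)))"
proof -
  have "indicator A = (\<lambda>x. indicator (A \<inter> B) x + indicator (A - B) x :: complex)"
    by (simp add: indicator_def fun_eq_iff)
  then show ?thesis
    by (simp add: mult_op_plus comp_op_plus_right[OF assms bounded_op_mult_op bounded_op_mult_op]
        linfty_indicator)
qed

lemma comp_mult_op_indicator_UNIV:
  assumes "is_bounded_op T"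
  shows "T \<circ> mult_op (indicator UNIV) = T"
proof
  fix f
  show "(T \<circ> mult_op (indicator UNIV)) f = T f"
    by (cases "f \<in> ell2") (simp_all add: mult_op_apply mult_op_outside bounded_op_outside[OF assms]
        bounded_op_zero[OF assms])
qed

definition the_preimage :: "('x \<rightharpoonup> 'x) \<Rightarrow> 'x \<Rightarrow> 'x" where
  "the_preimage \<sigma> y = (THE x. \<sigma> x = Some y)"

lemma the_preimage_eq:
  assumes "inj_on \<sigma> (dom \<sigma>)" "\<sigma> x = Some y"
  shows "the_preimage \<sigma> y = x"
  unfolding the_preimage_def
proof (rule the_equality[where P="\<lambda>x. \<sigma> x = Some y", OF assms(2)])
  fix x' assume "\<sigma> x' = Some y"
  then show "x' = x" using assms inj_onD[OF assms(1), of x' x] by (simp add: domI)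
qed

lemma Vop_apply:
  "f \<in> ell2 \<Longrightarrow> Vop \<alpha> s f = (\<lambda>y. if \<exists>x. \<alpha> s x = Some y then f (the_preimage (\<alpha> s) y) else 0)"
  unfolding Vop_def the_preimage_def by simp

lemma Vop_outside: "f \<notin> ell2 \<Longrightarrow> Vop \<alpha> s f = (\<lambda>_. 0)"
  unfolding Vop_def by simp

lemma Vop_l2norm_le:
  assumes inj: "inj_on (\<alpha> s) (dom (\<alpha> s))" and f: "f \<in> ell2"
  shows "Vop \<alpha> s f \<in> ell2" "l2norm (Vop \<alpha> s f) \<le> l2norm f"
proof -
  define R where "R = {y. \<exists>x. \<alpha> s x = Some y}"
  have inj_R: "inj_on (the_preimage (\<alpha> s)) R"
    by (rule inj_onI) (auto simp: R_def the_preimage_eq[OF inj])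
  have "L2_set (\<lambda>y. cmod (Vop \<alpha> s f y)) F \<le> l2norm f" if F: "finite F" for F
  proof -
    have "(\<Sum>y\<in>F. (cmod (Vop \<alpha> s f y))^2) = (\<Sum>y\<in>F \<inter> R. (cmod (f (the_preimage (\<alpha> s) y)))^2)"
      by (rule sum.mono_neutral_cong_right) (use F in \<open>auto simp: Vop_apply[OF f] R_def\<close>)
    also have "\<dots> = (\<Sum>x\<in>the_preimage (\<alpha> s) ` (F \<inter> R). (cmod (f x))^2)"
      by (rule sum.reindex[symmetric, unfolded comp_def]) (rule inj_on_subset[OF inj_R], blast)
    finally have "L2_set (\<lambda>y. cmod (Vop \<alpha> s f y)) F = L2_set (\<lambda>x. cmod (f x)) (the_preimage (\<alpha> s) ` (F \<inter> R))"
      unfolding L2_set_def by simp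
    also have "\<dots> \<le> l2norm f" by (rule L2_set_le_l2norm[OF f]) (use F in simp)
    finally show ?thesis .
  qed
  then show "Vop \<alpha> s f \<in> ell2" "l2norm (Vop \<alpha> s f) \<le> l2norm f"
    using l2norm_leI[of "Vop \<alpha> s f" "l2norm f"] by auto
qed

lemma bounded_op_Vop:
  assumes "inj_on (\<alpha> s) (dom (\<alpha> s))"
  shows "is_bounded_op (Vop \<alpha> s)"
proof (rule is_bounded_opI[where K=1])
  show "Vop \<alpha> s f = (\<lambda>_. 0)" if "f \<notin> ell2" for f by (rule Vop_outside[OF that])
  show "Vop \<alpha> s (\<lambda>x. a * f x + b * g x) = (\<lambda>x. a * Vop \<alpha> s f x + b * Vop \<alpha> s g x)"
    if "f \<in> ell2" "g \<in> ell2" for f g a b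
    using that ell2_lincomb[OF that] by (simp add: Vop_apply fun_eq_iff)
  show "Vop \<alpha> s f \<in> ell2 \<and> l2norm (Vop \<alpha> s f) \<le> 1 * l2norm f" if "f \<in> ell2" for f
    using Vop_l2norm_le[of \<alpha> s, OF assms that] by simp
qed

section \<open>Norm closures of \<open>*\<close>-algebras of operators\<close>

lemma opnorm_minus_triangle:
  assumes "is_bounded_op S" "is_bounded_op T" "is_bounded_op U"
  shows "opnorm (op_minus S U) \<le> opnorm (op_minus S T) + opnorm (op_minus T U)"
proof -
  have "op_minus S U = op_plus (op_minus S T) (op_minus T U)"
    unfolding op_minus_def op_plus_def by simp
  then show ?thesis using bounded_op_plus(2) bounded_op_minus(1) assms by metis
qed

definition norm_closure :: "'x op set \<Rightarrow> 'x op set" where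
  "norm_closure D = {T. is_bounded_op T \<and> (\<forall>\<epsilon>>0. \<exists>B\<in>D. opnorm (op_minus T B) < \<epsilon>)}"

lemma norm_closureI:
  "is_bounded_op T \<Longrightarrow> (\<And>\<epsilon>. 0 < \<epsilon> \<Longrightarrow> \<exists>B\<in>D. opnorm (op_minus T B) < \<epsilon>) \<Longrightarrow> T \<in> norm_closure D"
  unfolding norm_closure_def by blast

lemma norm_closureE:
  assumes "T \<in> norm_closure D" "0 < \<epsilon>"
  obtains B where "B \<in> D" "opnorm (op_minus T B) < \<epsilon>"
  using assms unfolding norm_closure_def by blast

lemma norm_closure_bounded: "T \<in> norm_closure D \<Longrightarrow> is_bounded_op T"
  unfolding norm_closure_def by blast

locale op_star_algebra =
  fixes D :: "'x op set"
  assumes bounded: "A \<in> D \<Longrightarrow> is_bounded_op A"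
    and plus: "A \<in> D \<Longrightarrow> B \<in> D \<Longrightarrow> op_plus A B \<in> D"
    and scale: "A \<in> D \<Longrightarrow> op_scale c A \<in> D"
    and comp: "A \<in> D \<Longrightarrow> B \<in> D \<Longrightarrow> A \<circ> B \<in> D"
    and adjoint: "A \<in> D \<Longrightarrow> adjoint_op A \<in> D"
begin

lemma subset_norm_closure: "D \<subseteq> norm_closure D"
proof
  fix B assume B: "B \<in> D"
  have "opnorm (op_minus B B) = 0" by (simp add: op_minus_self opnorm_zero_op)
  then show "B \<in> norm_closure D" using bounded[OF B] B by (intro norm_closureI bexI[of _ B]) auto
qed

lemma norm_closure_plus:
  assumes S: "S \<in> norm_closure D" and T: "T \<in> norm_closure D"
  shows "op_plus S T \<in> norm_closure D"
proof (rule norm_closureI)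
  note bdd = norm_closure_bounded[OF S] norm_closure_bounded[OF T]
  show "is_bounded_op (op_plus S T)" by (rule bounded_op_plus(1)[OF bdd])
  fix \<epsilon> :: real assume "0 < \<epsilon>"
  then have "0 < \<epsilon>/2" by simp
  then obtain B C where B: "B \<in> D" "opnorm (op_minus S B) < \<epsilon>/2"
    and C: "C \<in> D" "opnorm (op_minus T C) < \<epsilon>/2"
    using norm_closureE[OF S] norm_closureE[OF T] by metis
  have "op_minus (op_plus S T) (op_plus B C) = op_plus (op_minus S B) (op_minus T C)"
    unfolding op_minus_def op_plus_def by (intro ext) simp
  then have "opnorm (op_minus (op_plus S T) (op_plus B C)) \<le> opnorm (op_minus S B) + opnorm (op_minus T C)"
    using bounded_op_plus(2)[OF bounded_op_minus(1)[OF bdd(1) bounded[OF B(1)]]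
        bounded_op_minus(1)[OF bdd(2) bounded[OF C(1)]]] by simp
  then have "opnorm (op_minus (op_plus S T) (op_plus B C)) < \<epsilon>" using B(2) C(2) by linarith
  then show "\<exists>B\<in>D. opnorm (op_minus (op_plus S T) B) < \<epsilon>" using plus[OF B(1) C(1)] by blast
qed

lemma norm_closure_scale:
  assumes T: "T \<in> norm_closure D"
  shows "op_scale c T \<in> norm_closure D"
proof (rule norm_closureI)
  note bdd = norm_closure_bounded[OF T]
  show "is_bounded_op (op_scale c T)" by (rule bounded_op_op_scale(1)[OF bdd])
  fix \<epsilon> :: real assume \<epsilon>: "0 < \<epsilon>"
  then have "0 < \<epsilon> / (cmod c + 1)" by (simp add: add_nonneg_pos)
  then obtain B where B: "B \<in> D" "opnorm (op_minus T B) < \<epsilon> / (cmod c + 1)"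
    using norm_closureE[OF T] by blast
  have "op_minus (op_scale c T) (op_scale c B) = op_scale c (op_minus T B)"
    unfolding op_minus_def op_scale_def by (intro ext) (simp add: right_diff_distrib)
  then have "opnorm (op_minus (op_scale c T) (op_scale c B)) \<le> cmod c * opnorm (op_minus T B)"
    using bounded_op_op_scale(2)[OF bounded_op_minus(1)[OF bdd bounded[OF B(1)]]] by simp
  also have "\<dots> \<le> cmod c * (\<epsilon> / (cmod c + 1))" using B(2) by (intro mult_left_mono) auto
  also have "\<dots> = \<epsilon> * (cmod c / (cmod c + 1))" by simp
  also have "\<dots> < \<epsilon> * 1"
    using \<epsilon> by (intro mult_strict_left_mono) (simp_all add: add_nonneg_pos)
  finally show "\<exists>B\<in>D. opnorm (op_minus (op_scale c T) B) < \<epsilon>" using scale[OF B(1)] by auto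
qed

text \<open>\<open>ST - BC = S(T - C) + (S - B)C\<close>, and \<open>\<parallel>C\<parallel> \<le> \<parallel>T\<parallel> + \<eta>\<close>.\<close>
lemma norm_closure_comp:
  assumes S: "S \<in> norm_closure D" and T: "T \<in> norm_closure D"
  shows "S \<circ> T \<in> norm_closure D"
proof (rule norm_closureI)
  note bdd = norm_closure_bounded[OF S] norm_closure_bounded[OF T]
  show "is_bounded_op (S \<circ> T)" by (rule bounded_op_comp(1)[OF bdd])
  fix \<epsilon> :: real assume \<epsilon>: "0 < \<epsilon>"
  define M where "M = opnorm S + opnorm T + 2"
  have M: "0 < M" unfolding M_def using opnorm_nonneg[OF bdd(1)] opnorm_nonneg[OF bdd(2)] by simp
  define \<eta> where "\<eta> = min 1 (\<epsilon> / M)"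
  have \<eta>: "0 < \<eta>" "\<eta> \<le> 1" "\<eta> * M \<le> \<epsilon>"
    unfolding \<eta>_def using \<epsilon> M by (auto simp: min_def field_simps)
  obtain B C where B: "B \<in> D" "opnorm (op_minus S B) < \<eta>" and C: "C \<in> D" "opnorm (op_minus T C) < \<eta>"
    using norm_closureE[OF S \<eta>(1)] norm_closureE[OF T \<eta>(1)] by metis
  note bddBC = bounded[OF B(1)] bounded[OF C(1)]
  note diffs = bounded_op_minus(1)[OF bdd(1) bddBC(1)] bounded_op_minus(1)[OF bdd(2) bddBC(2)]
  have "C = op_minus T (op_minus T C)" unfolding op_minus_def by simp
  then have "opnorm C \<le> opnorm T + opnorm (op_minus T C)"
    using bounded_op_minus(2)[OF bdd(2) diffs(2)] by simp
  then have normC: "opnorm C \<le> opnorm T + \<eta>" using C(2) by simp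
  have "op_minus (S \<circ> T) (B \<circ> C) = op_plus (S \<circ> op_minus T C) (op_minus S B \<circ> C)"
    unfolding comp_op_minus_right[OF bdd(1) bdd(2) bddBC(2)] unfolding op_minus_def op_plus_def
    by (intro ext) simp
  then have "opnorm (op_minus (S \<circ> T) (B \<circ> C)) \<le> opnorm S * opnorm (op_minus T C) + opnorm (op_minus S B) * opnorm C"
    using bounded_op_plus(2)[OF bounded_op_comp(1)[OF bdd(1) diffs(2)] bounded_op_comp(1)[OF diffs(1) bddBC(2)]]
      bounded_op_comp(2)[OF bdd(1) diffs(2)] bounded_op_comp(2)[OF diffs(1) bddBC(2)] by simp
  also have "\<dots> \<le> opnorm S * \<eta> + \<eta> * (opnorm T + \<eta>)"
    using B(2) C(2) normC opnorm_nonneg[OF bdd(1)] opnorm_nonneg[OF bddBC(2)] opnorm_nonneg[OF diffs(2)] \<eta>(1)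
    by (intro add_mono mult_mono) auto
  also have "\<dots> < \<eta> * M" unfolding M_def using \<eta> by (simp add: algebra_simps)
  finally have "opnorm (op_minus (S \<circ> T) (B \<circ> C)) < \<epsilon>" using \<eta>(3) by linarith
  then show "\<exists>B\<in>D. opnorm (op_minus (S \<circ> T) B) < \<epsilon>" using comp[OF B(1) C(1)] by blast
qed

lemma norm_closure_adjoint_op:
  assumes T: "T \<in> norm_closure D"
  shows "adjoint_op T \<in> norm_closure D"
proof (rule norm_closureI)
  note bdd = norm_closure_bounded[OF T]
  show "is_bounded_op (adjoint_op T)" by (rule bounded_op_adjoint_op(1)[OF bdd])
  fix \<epsilon> :: real assume "0 < \<epsilon>"
  then obtain B where B: "B \<in> D" "opnorm (op_minus T B) < \<epsilon>" using T norm_closureE by blast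
  have "opnorm (op_minus (adjoint_op T) (adjoint_op B)) \<le> opnorm (op_minus T B)"
    using bounded_op_adjoint_op(2)[OF bounded_op_minus(1)[OF bdd bounded[OF B(1)]]]
    unfolding adjoint_op_minus[OF bdd bounded[OF B(1)]] .
  then have "opnorm (op_minus (adjoint_op T) (adjoint_op B)) < \<epsilon>" using B(2) by linarith
  then show "\<exists>B\<in>D. opnorm (op_minus (adjoint_op T) B) < \<epsilon>" using adjoint[OF B(1)] by blast
qed

lemma norm_closure_norm_closure:
  assumes T: "is_bounded_op T" and approx: "\<forall>\<epsilon>>0. \<exists>B\<in>norm_closure D. opnorm (op_minus T B) < \<epsilon>"
  shows "T \<in> norm_closure D"
proof (rule norm_closureI[OF T])
  fix \<epsilon> :: real assume "0 < \<epsilon>"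
  then have "0 < \<epsilon>/2" by simp
  then obtain B where B: "B \<in> norm_closure D" "opnorm (op_minus T B) < \<epsilon>/2"
    using approx by blast
  obtain C where C: "C \<in> D" "opnorm (op_minus B C) < \<epsilon>/2"
    using norm_closureE[OF B(1) \<open>0 < \<epsilon>/2\<close>] by blast
  have "opnorm (op_minus T C) < \<epsilon>"
    using opnorm_minus_triangle[OF T norm_closure_bounded[OF B(1)] bounded[OF C(1)]] B(2) C(2) by linarith
  then show "\<exists>B\<in>D. opnorm (op_minus T B) < \<epsilon>" using C(1) by blast
qed

lemma cstar_subalg_norm_closure: "is_cstar_subalg (norm_closure D)"
  unfolding is_cstar_subalg_def
proof (intro conjI ballI allI impI)
  show "norm_closure D \<subseteq> {T. is_bounded_op T}" using norm_closure_bounded by blast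
  show "adj T \<in> norm_closure D" if "T \<in> norm_closure D" for T
    using norm_closure_adjoint_op[OF that] adj_eq_adjoint_op[OF norm_closure_bounded[OF that]] by simp
  show "T \<in> norm_closure D"
    if "is_bounded_op T \<and> (\<forall>\<epsilon>>0. \<exists>B\<in>norm_closure D. opnorm (op_minus T B) < \<epsilon>)" for T
    using norm_closure_norm_closure that by blast
qed (auto intro: norm_closure_plus norm_closure_comp norm_closure_scale)

end

section \<open>Three-colouring a partial injection\<close>

definition proper_partial_colouring :: "('x \<rightharpoonup> 'x) \<Rightarrow> ('x \<times> nat) set \<Rightarrow> bool" where
  "proper_partial_colouring \<sigma> R \<longleftrightarrow> single_valued R \<and> (\<forall>(x, i)\<in>R. i < 3) \<and>
     (\<forall>x y i j. \<sigma> x = Some y \<and> y \<noteq> x \<and> (x, i) \<in> R \<and> (y, j) \<in> R \<longrightarrow> i \<noteq> j)"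

lemma proper_partial_colouring_Union:
  assumes C: "C \<in> chains {R. proper_partial_colouring \<sigma> R}"
  shows "proper_partial_colouring \<sigma> (\<Union>C)"
proof -
  have proper: "single_valued R" "\<forall>(x, i)\<in>R. i < 3"
    "\<And>x y i j. \<sigma> x = Some y \<Longrightarrow> y \<noteq> x \<Longrightarrow> (x, i) \<in> R \<Longrightarrow> (y, j) \<in> R \<Longrightarrow> i \<noteq> j"
    if "R \<in> C" for R
    using chainsD2[OF C] that unfolding proper_partial_colouring_def by blast+
  have common: "\<exists>R\<in>C. p \<in> R \<and> q \<in> R" if pq: "p \<in> \<Union>C" "q \<in> \<Union>C" for p q
  proof -
    obtain R1 R2 where R: "R1 \<in> C" "R2 \<in> C" "p \<in> R1" "q \<in> R2" using pq by blast
    from chainsD[OF C R(1,2)] show ?thesis using R by blast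
  qed
  show ?thesis
    unfolding proper_partial_colouring_def
  proof (intro conjI allI impI ballI single_valuedI)
    show "j = k" if "(x, j) \<in> \<Union>C" "(x, k) \<in> \<Union>C" for x j k
      using common[OF that] proper(1) single_valuedD by metis
    show "case p of (x, i) \<Rightarrow> i < 3" if "p \<in> \<Union>C" for p
      using that proper(2) by blast
    show "i \<noteq> j" if "\<sigma> x = Some y \<and> y \<noteq> x \<and> (x, i) \<in> \<Union>C \<and> (y, j) \<in> \<Union>C" for x y i j
      using that common[of "(x, i)" "(y, j)"] proper(3) by metis
  qed
qed

text \<open>An uncoloured point has at most two neighbours, its image and (by injectivity) its
  preimage, so one of three colours is still free.\<close>
lemma proper_partial_colouring_insert:
  assumes inj: "inj_on \<sigma> (dom \<sigma>)" and R: "proper_partial_colouring \<sigma> R" and x: "x \<notin> Domain R"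
  obtains i where "proper_partial_colouring \<sigma> (insert (x, i) R)"
proof -
  have sv: "\<And>y j k. (y, j) \<in> R \<Longrightarrow> (y, k) \<in> R \<Longrightarrow> j = k"
    and bound: "\<And>y j. (y, j) \<in> R \<Longrightarrow> j < 3"
    and adj: "\<And>y z j k. \<sigma> y = Some z \<Longrightarrow> z \<noteq> y \<Longrightarrow> (y, j) \<in> R \<Longrightarrow> (z, k) \<in> R \<Longrightarrow> j \<noteq> k"
    using R unfolding proper_partial_colouring_def single_valued_def by blast+
  have xR: "(x, j) \<notin> R" for j using x by blast
  have "\<exists>k1. \<forall>y j. \<sigma> x = Some y \<longrightarrow> (y, j) \<in> R \<longrightarrow> j = k1"
  proof (cases "\<exists>y j. \<sigma> x = Some y \<and> (y, j) \<in> R")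
    case True
    then obtain y j where "\<sigma> x = Some y" "(y, j) \<in> R" by blast
    then show ?thesis using sv by (intro exI[of _ j]) auto
  qed auto
  then obtain k1 where k1: "\<And>y j. \<sigma> x = Some y \<Longrightarrow> (y, j) \<in> R \<Longrightarrow> j = k1" by blast
  have "\<exists>k2. \<forall>z j. \<sigma> z = Some x \<longrightarrow> (z, j) \<in> R \<longrightarrow> j = k2"
  proof (cases "\<exists>z j. \<sigma> z = Some x \<and> (z, j) \<in> R")
    case True
    then obtain z j where z: "\<sigma> z = Some x" "(z, j) \<in> R" by blast
    have "z' = z" if "\<sigma> z' = Some x" for z'
      using that z(1) inj_onD[OF inj, of z' z] by (simp add: domI)
    then show ?thesis using sv z(2) by (intro exI[of _ j]) auto
  qed auto
  then obtain k2 where k2: "\<And>z j. \<sigma> z = Some x \<Longrightarrow> (z, j) \<in> R \<Longrightarrow> j = k2" by blast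
  have "\<exists>i::nat. i < 3 \<and> i \<noteq> k1 \<and> i \<noteq> k2" by presburger
  then obtain i :: nat where i: "i < 3" "i \<noteq> k1" "i \<noteq> k2" by blast
  have "proper_partial_colouring \<sigma> (insert (x, i) R)"
    unfolding proper_partial_colouring_def
  proof (intro conjI allI impI ballI single_valuedI)
    show "j = k" if "(a, j) \<in> insert (x, i) R" "(a, k) \<in> insert (x, i) R" for a j k
      using that xR sv by blast
    show "case p of (a, j) \<Rightarrow> j < 3" if "p \<in> insert (x, i) R" for p
      using that i(1) bound by auto
    show "j \<noteq> k" if "\<sigma> a = Some b \<and> b \<noteq> a \<and> (a, j) \<in> insert (x, i) R \<and> (b, k) \<in> insert (x, i) R"
      for a b j k
      using that xR i k1 k2 adj by (metis insert_iff prod.inject)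
  qed
  then show ?thesis by (rule that)
qed

lemma partial_injection_three_colouring:
  assumes inj: "inj_on \<sigma> (dom \<sigma>)"
  obtains c :: "'x \<Rightarrow> nat" where "\<And>x. c x < 3" "\<And>x y. \<sigma> x = Some y \<Longrightarrow> y \<noteq> x \<Longrightarrow> c x \<noteq> c y"
proof -
  have "\<forall>C\<in>chains {R. proper_partial_colouring \<sigma> R}. \<Union>C \<in> {R. proper_partial_colouring \<sigma> R}"
    using proper_partial_colouring_Union by blast
  from Zorn_Lemma[OF this] obtain M where M: "proper_partial_colouring \<sigma> M"
    and max: "\<And>R. proper_partial_colouring \<sigma> R \<Longrightarrow> M \<subseteq> R \<Longrightarrow> R = M"
    by blast
  have total: "x \<in> Domain M" for x
  proof (rule ccontr)
    assume x: "x \<notin> Domain M"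
    then obtain i where "proper_partial_colouring \<sigma> (insert (x, i) M)"
      using proper_partial_colouring_insert[OF inj M] by blast
    then have "insert (x, i) M = M" using max by blast
    then show False using x by blast
  qed
  define c where "c x = (SOME i. (x, i) \<in> M)" for x
  have cM: "(x, c x) \<in> M" for x unfolding c_def using total[of x] by (auto intro: someI)
  show ?thesis
  proof (rule that)
    show "c x < 3" for x using cM[of x] M unfolding proper_partial_colouring_def by blast
    show "c x \<noteq> c y" if "\<sigma> x = Some y" "y \<noteq> x" for x y
      using that cM[of x] cM[of y] M unfolding proper_partial_colouring_def by blast
  qed
qed

section \<open>The algebra generated by a representation\<close>

lemma cstar_genI: "(\<And>A. is_cstar_subalg A \<Longrightarrow> G \<subseteq> A \<Longrightarrow> T \<in> A) \<Longrightarrow> T \<in> cstar_gen G"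
  unfolding cstar_gen_def by blast

lemma cstar_genD: "T \<in> cstar_gen G \<Longrightarrow> is_cstar_subalg A \<Longrightarrow> G \<subseteq> A \<Longrightarrow> T \<in> A"
  unfolding cstar_gen_def by blast

lemma cstar_gen_generator: "T \<in> G \<Longrightarrow> T \<in> cstar_gen G"
  by (rule cstar_genI) blast

lemma cstar_gen_least: "is_cstar_subalg A \<Longrightarrow> G \<subseteq> A \<Longrightarrow> cstar_gen G \<subseteq> A"
  unfolding cstar_gen_def by blast

lemma cstar_subalg_closed:
  assumes "is_cstar_subalg A" "S \<in> A" "T \<in> A"
  shows "op_plus S T \<in> A" "S \<circ> T \<in> A" "op_scale c S \<in> A"
proof -
  have "\<forall>S\<in>A. \<forall>T\<in>A. op_plus S T \<in> A" "\<forall>c. \<forall>T\<in>A. op_scale c T \<in> A"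
    "\<forall>S\<in>A. \<forall>T\<in>A. S \<circ> T \<in> A"
    using assms(1) unfolding is_cstar_subalg_def by simp_all
  then show "op_plus S T \<in> A" "S \<circ> T \<in> A" "op_scale c S \<in> A" using assms(2,3) by blast+
qed

lemma cstar_gen_closed:
  assumes "S \<in> cstar_gen G" "T \<in> cstar_gen G"
  shows "op_plus S T \<in> cstar_gen G" "S \<circ> T \<in> cstar_gen G" "op_scale c S \<in> cstar_gen G"
    "op_minus S T \<in> cstar_gen G"
proof -
  have closed: "op_plus S T \<in> A" "S \<circ> T \<in> A" "op_scale c S \<in> A" "op_minus S T \<in> A"
    if "is_cstar_subalg A" "G \<subseteq> A" for A
  proof -
    have "S \<in> A" "T \<in> A" using cstar_genD assms that by blast+
    then show "op_plus S T \<in> A" "S \<circ> T \<in> A" "op_scale c S \<in> A" "op_minus S T \<in> A"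
      unfolding op_minus_eq_plus_scale using cstar_subalg_closed[OF that(1)] by blast+
  qed
  show "op_plus S T \<in> cstar_gen G" "S \<circ> T \<in> cstar_gen G" "op_scale c S \<in> cstar_gen G"
    "op_minus S T \<in> cstar_gen G"
    using closed by (intro cstar_genI; simp)+
qed

locale inverse_semigroup_rep =
  fixes mult :: "'s \<Rightarrow> 's \<Rightarrow> 's" and e :: 's and \<alpha> :: "'s \<Rightarrow> ('x \<rightharpoonup> 'x)"
  assumes partial_bij: "\<forall>s. inj_on (\<alpha> s) (dom (\<alpha> s))"
    and hom: "\<forall>s t. \<alpha> (mult s t) = \<alpha> s \<circ>\<^sub>m \<alpha> t"
    and unital: "\<alpha> e = Some"
    and inverse: "\<forall>s. \<exists>!t. mult (mult s t) s = s \<and> mult (mult t s) t = t"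
begin

lemma the_preimage_alpha: "\<alpha> s x = Some y \<Longrightarrow> the_preimage (\<alpha> s) y = x"
  by (rule the_preimage_eq[OF partial_bij[rule_format]])

lemma alpha_inj: "\<alpha> s x = Some y \<Longrightarrow> \<alpha> s x' = Some y \<Longrightarrow> x' = x"
  using the_preimage_alpha by metis

lemma bounded_op_V: "is_bounded_op (Vop \<alpha> s)"
  by (rule bounded_op_Vop[OF partial_bij[rule_format]])

lemma ell2_V: "Vop \<alpha> s f \<in> ell2"
  by (cases "f \<in> ell2") (simp_all add: bounded_op_ell2[OF bounded_op_V] Vop_outside)

lemma Vop_apply_Some: "f \<in> ell2 \<Longrightarrow> \<alpha> s x = Some y \<Longrightarrow> Vop \<alpha> s f y = f x"
  by (auto simp: Vop_apply the_preimage_alpha)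

lemma Vop_apply_None: "f \<in> ell2 \<Longrightarrow> \<nexists>x. \<alpha> s x = Some y \<Longrightarrow> Vop \<alpha> s f y = 0"
  by (simp add: Vop_apply)

lemma Vop_comp_Vop: "Vop \<alpha> s \<circ> Vop \<alpha> t = Vop \<alpha> (mult s t)"
proof (intro ext)
  fix f y
  have st: "\<alpha> (mult s t) w = Some y \<longleftrightarrow> (\<exists>z. \<alpha> t w = Some z \<and> \<alpha> s z = Some y)" for w
    using hom by (simp add: map_comp_Some_iff)
  show "(Vop \<alpha> s \<circ> Vop \<alpha> t) f y = Vop \<alpha> (mult s t) f y"
  proof (cases "f \<in> ell2")
    case False then show ?thesis by (simp add: Vop_outside Vop_apply)
  next
    case f: True
    consider (path) w z where "\<alpha> t w = Some z" "\<alpha> s z = Some y"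
      | (stuck) z where "\<alpha> s z = Some y" "\<nexists>w. \<alpha> t w = Some z"
      | (none) "\<nexists>z. \<alpha> s z = Some y"
      by blast
    then show ?thesis
    proof cases
      case path
      then have "\<alpha> (mult s t) w = Some y" using st by blast
      then show ?thesis using path f ell2_V by (simp add: Vop_apply_Some)
    next
      case stuck
      then have "\<nexists>w. \<alpha> (mult s t) w = Some y" using st alpha_inj by metis
      then show ?thesis using stuck f ell2_V by (simp add: Vop_apply_Some Vop_apply_None)
    next
      case none
      then have "\<nexists>w. \<alpha> (mult s t) w = Some y" using st by blast
      then show ?thesis using none f ell2_V by (simp add: Vop_apply_None)
    qed
  qed
qed

lemma Vop_unit: "f \<in> ell2 \<Longrightarrow> Vop \<alpha> e f = f"
  using Vop_apply_Some[of f e] unital by (simp add: fun_eq_iff)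

lemma mult_op_comp_Vop_unit: "mult_op g \<circ> Vop \<alpha> e = mult_op g"
  by (intro ext) (simp add: Vop_unit mult_op_def Vop_outside)

lemma mult_op_one_comp_Vop: "mult_op (\<lambda>_. 1) \<circ> Vop \<alpha> s = Vop \<alpha> s"
  by (intro ext) (simp add: mult_op_apply ell2_V)

definition transport :: "'s \<Rightarrow> 'x vec \<Rightarrow> 'x vec" where
  "transport s h y = (if \<exists>x. \<alpha> s x = Some y then h (the_preimage (\<alpha> s) y) else 0)"

lemma linfty_transport: "h \<in> linfty \<Longrightarrow> transport s h \<in> linfty"
proof -
  assume "h \<in> linfty"
  then obtain K where "0 \<le> K" "\<And>x. cmod (h x) \<le> K" using linfty_bound by blast
  then have "cmod (transport s h y) \<le> K" for y by (simp add: transport_def)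
  then show ?thesis unfolding linfty_def by blast
qed

lemma Vop_comp_mult_op:
  assumes h: "h \<in> linfty"
  shows "Vop \<alpha> s \<circ> mult_op h = mult_op (transport s h) \<circ> Vop \<alpha> s"
proof
  fix f
  show "(Vop \<alpha> s \<circ> mult_op h) f = (mult_op (transport s h) \<circ> Vop \<alpha> s) f"
  proof (cases "f \<in> ell2")
    case True
    then have "mult_op h f \<in> ell2" by (rule bounded_op_ell2[OF bounded_op_mult_op[OF h]])
    then show ?thesis using True unfolding comp_def mult_op_apply[OF ell2_V]
      by (simp add: Vop_apply mult_op_apply transport_def fun_eq_iff)
  next
    case False
    then show ?thesis by (simp add: Vop_apply Vop_outside mult_op_apply mult_op_outside)
  qed
qed

definition weighted_shift :: "'x vec \<Rightarrow> 's \<Rightarrow> 'x op" where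
  "weighted_shift g s = mult_op g \<circ> Vop \<alpha> s"

lemma bounded_op_weighted_shift: "g \<in> linfty \<Longrightarrow> is_bounded_op (weighted_shift g s)"
  unfolding weighted_shift_def by (rule bounded_op_comp(1)[OF bounded_op_mult_op bounded_op_V])

lemma weighted_shift_comp_weighted_shift:
  assumes "g \<in> linfty" "h \<in> linfty"
  shows "weighted_shift g s \<circ> weighted_shift h t = weighted_shift (\<lambda>x. g x * transport s h x) (mult s t)"
proof -
  have "weighted_shift g s \<circ> weighted_shift h t = mult_op g \<circ> (Vop \<alpha> s \<circ> mult_op h) \<circ> Vop \<alpha> t"
    unfolding weighted_shift_def by (simp add: o_assoc)
  also have "\<dots> = (mult_op g \<circ> mult_op (transport s h)) \<circ> (Vop \<alpha> s \<circ> Vop \<alpha> t)"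
    unfolding Vop_comp_mult_op[OF assms(2)] by (simp add: o_assoc)
  finally show ?thesis
    unfolding mult_op_comp[OF linfty_transport[OF assms(2)]] Vop_comp_Vop weighted_shift_def .
qed

lemma Vop_delta: "Vop \<alpha> s (delta x) = (case \<alpha> s x of None \<Rightarrow> (\<lambda>_. 0) | Some y \<Rightarrow> delta y)"
proof
  fix z
  show "Vop \<alpha> s (delta x) z = (case \<alpha> s x of None \<Rightarrow> (\<lambda>_. 0) | Some y \<Rightarrow> delta y) z"
  proof (cases "\<exists>x'. \<alpha> s x' = Some z")
    case True
    then obtain x' where x': "\<alpha> s x' = Some z" by blast
    then show ?thesis using Vop_apply_Some[OF delta_ell2(1) x'] alpha_inj[OF x', of x]
      by (cases "\<alpha> s x") (auto simp: delta_def)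
  next
    case False
    then show ?thesis using Vop_apply_None[OF delta_ell2(1) False]
      by (cases "\<alpha> s x") (auto simp: delta_def)
  qed
qed

lemma weighted_shift_delta:
  "weighted_shift g s (delta x) = (case \<alpha> s x of None \<Rightarrow> (\<lambda>_. 0) | Some y \<Rightarrow> (\<lambda>z. if z = y then g y else 0))"
  unfolding weighted_shift_def comp_def mult_op_apply[OF ell2_V] Vop_delta
  by (cases "\<alpha> s x") (simp_all add: delta_def fun_eq_iff)

lemma alpha_inverse: "\<exists>t. \<forall>x y. \<alpha> t y = Some x \<longleftrightarrow> \<alpha> s x = Some y"
proof -
  obtain t where t: "mult (mult s t) s = s" "mult (mult t s) t = t" using inverse by blast
  have s_eq: "\<alpha> s = (\<alpha> s \<circ>\<^sub>m \<alpha> t) \<circ>\<^sub>m \<alpha> s" using hom t(1) by metis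
  have t_eq: "\<alpha> t = (\<alpha> t \<circ>\<^sub>m \<alpha> s) \<circ>\<^sub>m \<alpha> t" using hom t(2) by metis
  have "\<alpha> t y = Some x \<longleftrightarrow> \<alpha> s x = Some y" for x y
  proof
    assume a: "\<alpha> t y = Some x"
    have "((\<alpha> t \<circ>\<^sub>m \<alpha> s) \<circ>\<^sub>m \<alpha> t) y = Some x" using t_eq a by simp
    then obtain z where "\<alpha> s x = Some z" "\<alpha> t z = Some x" using a by (auto simp: map_comp_Some_iff)
    then show "\<alpha> s x = Some y" using alpha_inj[OF a, of z] by simp
  next
    assume a: "\<alpha> s x = Some y"
    have "((\<alpha> s \<circ>\<^sub>m \<alpha> t) \<circ>\<^sub>m \<alpha> s) x = Some y" using s_eq a by simp
    then obtain z where "\<alpha> t y = Some z" "\<alpha> s z = Some y" using a by (auto simp: map_comp_Some_iff)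
    then show "\<alpha> t y = Some x" using alpha_inj[OF a, of z] by simp
  qed
  then show ?thesis by blast
qed

definition adjoint_weight :: "'x vec \<Rightarrow> 's \<Rightarrow> 'x vec" where
  "adjoint_weight g s x = (case \<alpha> s x of None \<Rightarrow> 0 | Some y \<Rightarrow> cnj (g y))"

lemma linfty_adjoint_weight: "g \<in> linfty \<Longrightarrow> adjoint_weight g s \<in> linfty"
proof -
  assume "g \<in> linfty"
  then obtain K where "0 \<le> K" "\<And>x. cmod (g x) \<le> K" using linfty_bound by blast
  then have "cmod (adjoint_weight g s x) \<le> K" for x by (cases "\<alpha> s x") (auto simp: adjoint_weight_def)
  then show ?thesis unfolding linfty_def by blast
qed

lemma adjoint_op_weighted_shift:
  obtains t where "adjoint_op (weighted_shift g s) = weighted_shift (adjoint_weight g s) t"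
proof -
  obtain t where t: "\<And>x y. \<alpha> t y = Some x \<longleftrightarrow> \<alpha> s x = Some y" using alpha_inverse by blast
  have "adjoint_op (weighted_shift g s) h x = weighted_shift (adjoint_weight g s) t h x" for h x
  proof (cases "h \<in> ell2")
    case False then show ?thesis by (simp add: adjoint_op_def weighted_shift_def Vop_outside mult_op_apply)
  next
    case True
    have lhs: "adjoint_op (weighted_shift g s) h x = l2inner (weighted_shift g s (delta x)) h"
      using True by (simp add: adjoint_op_def)
    have rhs: "weighted_shift (adjoint_weight g s) t h x = adjoint_weight g s x * Vop \<alpha> t h x"
      by (simp add: weighted_shift_def mult_op_apply ell2_V)
    show ?thesis
    proof (cases "\<alpha> s x")
      case None
      then show ?thesis unfolding lhs rhs weighted_shift_delta by (simp add: adjoint_weight_def l2inner_def)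
    next
      case (Some y)
      then have "Vop \<alpha> t h x = h y" using t Vop_apply_Some[OF True] by blast
      then show ?thesis using Some unfolding lhs rhs weighted_shift_delta
        by (simp add: adjoint_weight_def l2inner_single_left)
    qed
  qed
  then show ?thesis using that by blast
qed

inductive_set weighted_shift_sums :: "'x op set" where
  weighted_shift: "g \<in> linfty \<Longrightarrow> weighted_shift g s \<in> weighted_shift_sums"
| plus: "A \<in> weighted_shift_sums \<Longrightarrow> B \<in> weighted_shift_sums \<Longrightarrow> op_plus A B \<in> weighted_shift_sums"

lemma bounded_op_weighted_shift_sums: "A \<in> weighted_shift_sums \<Longrightarrow> is_bounded_op A"
  by (induction rule: weighted_shift_sums.induct) (auto intro: bounded_op_weighted_shift bounded_op_plus(1))

lemma weighted_shift_sums_scale: "A \<in> weighted_shift_sums \<Longrightarrow> op_scale c A \<in> weighted_shift_sums"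
proof (induction rule: weighted_shift_sums.induct)
  case (weighted_shift g s)
  have "(\<lambda>x. c * g x) \<in> linfty" using linfty_mult[OF linfty_const weighted_shift] .
  then show ?case unfolding weighted_shift_def op_scale_comp op_scale_mult_op
    using weighted_shift_sums.weighted_shift[unfolded weighted_shift_def] by blast
next
  case (plus A B)
  show ?case unfolding op_scale_op_plus by (rule weighted_shift_sums.plus[OF plus.IH])
qed

lemma weighted_shift_sums_comp: "A \<in> weighted_shift_sums \<Longrightarrow> B \<in> weighted_shift_sums \<Longrightarrow> A \<circ> B \<in> weighted_shift_sums"
proof (induction A arbitrary: B rule: weighted_shift_sums.induct)
  case (weighted_shift g s)
  from weighted_shift.prems show ?case
  proof (induction B rule: weighted_shift_sums.induct)
    case (weighted_shift h t)
    then show ?case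
      unfolding weighted_shift_comp_weighted_shift[OF \<open>g \<in> linfty\<close> weighted_shift]
      by (intro weighted_shift_sums.weighted_shift linfty_mult linfty_transport \<open>g \<in> linfty\<close>)
  next
    case (plus B1 B2)
    show ?case
      unfolding comp_op_plus_right[OF bounded_op_weighted_shift[OF \<open>g \<in> linfty\<close>]
          bounded_op_weighted_shift_sums[OF plus.hyps(1)] bounded_op_weighted_shift_sums[OF plus.hyps(2)]]
      by (rule weighted_shift_sums.plus[OF plus.IH])
  qed
next
  case (plus A1 A2)
  then show ?case unfolding comp_op_plus_left by (intro weighted_shift_sums.plus)
qed

lemma weighted_shift_sums_adjoint_op: "A \<in> weighted_shift_sums \<Longrightarrow> adjoint_op A \<in> weighted_shift_sums"
proof (induction rule: weighted_shift_sums.induct)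
  case (weighted_shift g s)
  obtain t where "adjoint_op (weighted_shift g s) = weighted_shift (adjoint_weight g s) t" by (rule adjoint_op_weighted_shift)
  then show ?case using linfty_adjoint_weight[OF weighted_shift] weighted_shift_sums.weighted_shift by simp
next
  case (plus A B)
  show ?case
    unfolding adjoint_op_plus[OF bounded_op_weighted_shift_sums[OF plus.hyps(1)] bounded_op_weighted_shift_sums[OF plus.hyps(2)]]
    by (rule weighted_shift_sums.plus[OF plus.IH])
qed

sublocale weighted_shift_sums: op_star_algebra weighted_shift_sums
  by unfold_locales
    (fact bounded_op_weighted_shift_sums weighted_shift_sums.plus weighted_shift_sums_scale weighted_shift_sums_comp weighted_shift_sums_adjoint_op)+

lemma generators_in_weighted_shift_sums: "g \<in> linfty \<Longrightarrow> mult_op g \<in> weighted_shift_sums" "Vop \<alpha> s \<in> weighted_shift_sums"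
  using weighted_shift_sums.weighted_shift[of g e] weighted_shift_sums.weighted_shift[OF linfty_const, of 1 s]
  by (simp_all add: weighted_shift_def mult_op_comp_Vop_unit mult_op_one_comp_Vop)

lemma RX_subset_norm_closure: "RX \<alpha> \<subseteq> norm_closure weighted_shift_sums"
  unfolding RX_def
  by (rule cstar_gen_least[OF weighted_shift_sums.cstar_subalg_norm_closure])
    (use weighted_shift_sums.subset_norm_closure generators_in_weighted_shift_sums in blast)

lemma mult_op_in_RX: "g \<in> linfty \<Longrightarrow> mult_op g \<in> RX \<alpha>"
  unfolding RX_def by (rule cstar_gen_generator) blast

lemma Vop_in_RX: "Vop \<alpha> s \<in> RX \<alpha>"
  unfolding RX_def by (rule cstar_gen_generator) blast

lemma RX_op_closed:
  assumes "A \<in> RX \<alpha>" "B \<in> RX \<alpha>"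
  shows "op_plus A B \<in> RX \<alpha>" "A \<circ> B \<in> RX \<alpha>" "op_scale c A \<in> RX \<alpha>" "op_minus A B \<in> RX \<alpha>"
  using assms unfolding RX_def by (fact cstar_gen_closed)+

lemma weighted_shift_sums_subset_RX: "A \<in> weighted_shift_sums \<Longrightarrow> A \<in> RX \<alpha>"
proof (induction rule: weighted_shift_sums.induct)
  case (weighted_shift g s)
  then show ?case unfolding weighted_shift_def by (intro RX_op_closed(2) mult_op_in_RX Vop_in_RX)
qed (rule RX_op_closed(1))

end

section \<open>The conditional expectation onto the diagonal\<close>

definition diag :: "'x op \<Rightarrow> 'x vec" where "diag T x = T (delta x) x"

lemma norm_diag_le: "is_bounded_op T \<Longrightarrow> cmod (diag T x) \<le> opnorm T"
  using norm_le_l2norm[OF bounded_op_ell2[OF _ delta_ell2(1)]] opnorm_bound[OF _ delta_ell2(1)]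
  unfolding diag_def delta_ell2(2) by (metis mult.right_neutral order_trans)

lemma linfty_diag:
  assumes "is_bounded_op T"
  shows "diag T \<in> linfty"
  unfolding linfty_def using norm_diag_le[OF assms] by blast

lemma diag_plus: "diag (op_plus T B) = (\<lambda>x. diag T x + diag B x)"
  unfolding diag_def op_plus_def ..

lemma diag_minus: "diag (op_minus T B) = (\<lambda>x. diag T x - diag B x)"
  unfolding diag_def op_minus_def ..

lemma sum_proj_comp_proj:
  assumes T: "is_bounded_op T" and f: "f \<in> ell2" and F: "finite F"
  shows "(\<Sum>x\<in>F. proj x (T (proj x f)) y) = (if y \<in> F then diag T y * f y else 0)"
proof -
  have "proj x f = (\<lambda>y. f x * delta x y)" for x unfolding proj_def delta_def using f by auto
  then have Tproj: "T (proj x f) = (\<lambda>y. f x * T (delta x) y)" for x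
    using bounded_op_scale[OF T delta_ell2(1)] by simp
  then have "T (proj x f) \<in> ell2" for x using l2norm_scale(1)[OF bounded_op_ell2[OF T delta_ell2(1)]] by simp
  then have "proj x (T (proj x f)) = (\<lambda>y. if y = x then T (proj x f) x else 0)" for x
    by (simp only: proj_def[of x "T (proj x f)"] if_True)
  then have "proj x (T (proj x f)) y = (if y = x then f x * diag T x else 0)" for x
    by (simp add: diag_def Tproj)
  then show ?thesis using F by (simp add: mult.commute)
qed

lemma ell2_net_limit_unique:
  assumes "g \<in> ell2" "g' \<in> ell2"
    and lim: "\<And>\<epsilon>. 0 < \<epsilon> \<Longrightarrow>
      \<exists>F0. finite F0 \<and> (\<forall>F. finite F \<and> F0 \<subseteq> F \<longrightarrow> l2norm (\<lambda>y. u F y - g y) < \<epsilon>)"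
    and lim': "\<And>\<epsilon>. 0 < \<epsilon> \<Longrightarrow>
      \<exists>F0. finite F0 \<and> (\<forall>F. finite F \<and> F0 \<subseteq> F \<longrightarrow> l2norm (\<lambda>y. u F y - g' y) < \<epsilon>)"
    and ell2_u: "\<And>F. finite F \<Longrightarrow> u F \<in> ell2"
  shows "g' = g"
proof -
  have "l2norm (\<lambda>y. g' y - g y) \<le> 0 + \<epsilon>" if "0 < \<epsilon>" for \<epsilon>
  proof -
    have "0 < \<epsilon>/2" using that by simp
    then obtain F1 F2 where "finite F1" "\<forall>F. finite F \<and> F1 \<subseteq> F \<longrightarrow> l2norm (\<lambda>y. u F y - g y) < \<epsilon>/2"
      and "finite F2" "\<forall>F. finite F \<and> F2 \<subseteq> F \<longrightarrow> l2norm (\<lambda>y. u F y - g' y) < \<epsilon>/2"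
      using lim lim' by meson
    then have fin: "finite (F1 \<union> F2)" and "l2norm (\<lambda>y. u (F1 \<union> F2) y - g y) < \<epsilon>/2"
      and "l2norm (\<lambda>y. g' y - u (F1 \<union> F2) y) < \<epsilon>/2"
      by (auto simp: l2norm_diff_commute[of g'])
    moreover have "(\<lambda>y. g' y - g y) = (\<lambda>y. (g' y - u (F1 \<union> F2) y) + (u (F1 \<union> F2) y - g y))" by simp
    then have "l2norm (\<lambda>y. g' y - g y) \<le> l2norm (\<lambda>y. g' y - u (F1 \<union> F2) y) + l2norm (\<lambda>y. u (F1 \<union> F2) y - g y)"
      using l2norm_add(2)[OF l2norm_diff(1)[OF assms(2) ell2_u[OF fin]] l2norm_diff(1)[OF ell2_u[OF fin] assms(1)]]
      by simp
    ultimately show ?thesis by linarith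
  qed
  then have "l2norm (\<lambda>y. g' y - g y) = 0"
    using field_le_epsilon[of _ 0] l2norm_nonneg order.antisym by metis
  then show ?thesis using l2norm_eq_0D[OF l2norm_diff(1)[OF assms(2,1)]] by (simp add: fun_eq_iff)
qed

lemma ell2_truncation_tendsto:
  assumes "g \<in> ell2" "0 < \<epsilon>"
  shows "\<exists>F0. finite F0 \<and>
    (\<forall>F. finite F \<and> F0 \<subseteq> F \<longrightarrow> l2norm (\<lambda>y. (if y \<in> F then g y else 0) - g y) < \<epsilon>)"
proof -
  have "l2norm (\<lambda>y. (if y \<in> F then g y else 0) - g y) = l2norm (\<lambda>y. if y \<in> F then 0 else g y)" for F
    unfolding l2norm_def by (intro arg_cong[where f=sqrt] infsum_cong) simp
  then show ?thesis using ell2_tail_small[OF assms] by metis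
qed

text \<open>The partial sums of \<open>P\<^sub>x T P\<^sub>x f\<close> over \<open>x \<in> F\<close> are the truncations of
  \<open>diag T \<cdot> f\<close> to \<open>F\<close>, hence converge to it.\<close>
lemma condexp_eq_mult_op_diag:
  assumes T: "is_bounded_op T"
  shows "condexp T = mult_op (diag T)"
proof
  fix f
  show "condexp T f = mult_op (diag T) f"
  proof (cases "f \<in> ell2")
    case False then show ?thesis unfolding condexp_def mult_op_def by simp
  next
    case f: True
    define u where "u F = (\<lambda>y. \<Sum>x\<in>F. proj x (T (proj x f)) y)" for F
    define g where "g = (\<lambda>y. diag T y * f y)"
    have g: "g \<in> ell2"
      using mult_op_l2norm_le(1)[OF norm_diag_le[OF T] f] unfolding g_def mult_op_apply[OF f] .
    have u: "u F = (\<lambda>y. if y \<in> F then g y else 0)" if "finite F" for F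
      unfolding u_def g_def sum_proj_comp_proj[OF T f that] ..
    have lim: "\<exists>F0. finite F0 \<and> (\<forall>F. finite F \<and> F0 \<subseteq> F \<longrightarrow> l2norm (\<lambda>y. u F y - g y) < \<epsilon>)"
      if "0 < \<epsilon>" for \<epsilon>
      using ell2_truncation_tendsto[OF g that] u by auto
    have "(THE g'. g' \<in> ell2 \<and> (\<forall>\<epsilon>>0. \<exists>F0. finite F0 \<and>
        (\<forall>F. finite F \<and> F0 \<subseteq> F \<longrightarrow> l2norm (\<lambda>y. u F y - g' y) < \<epsilon>))) = g"
    proof (rule the_equality)
      show "g \<in> ell2 \<and> (\<forall>\<epsilon>>0. \<exists>F0. finite F0 \<and>
          (\<forall>F. finite F \<and> F0 \<subseteq> F \<longrightarrow> l2norm (\<lambda>y. u F y - g y) < \<epsilon>))"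
        using g lim by blast
      have "u F \<in> ell2" if "finite F" for F unfolding u[OF that] by (rule l2norm_finite_support(1)[OF that])
      then show "g' = g" if "g' \<in> ell2 \<and> (\<forall>\<epsilon>>0. \<exists>F0. finite F0 \<and>
          (\<forall>F. finite F \<and> F0 \<subseteq> F \<longrightarrow> l2norm (\<lambda>y. u F y - g' y) < \<epsilon>))" for g'
        using that ell2_net_limit_unique[OF g _ lim, of g'] by blast
    qed
    moreover have "(\<Sum>x\<in>F. proj x (T (proj x f)) y) = u F y" for F y unfolding u_def ..
    ultimately show ?thesis using f unfolding condexp_def by (simp add: mult_op_apply g_def)
  qed
qed

lemma bounded_op_condexp: "is_bounded_op T \<Longrightarrow> is_bounded_op (condexp T)"
  by (simp add: condexp_eq_mult_op_diag bounded_op_mult_op linfty_diag)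

lemma opnorm_condexp_le: "is_bounded_op T \<Longrightarrow> opnorm (condexp T) \<le> opnorm T"
  by (simp add: condexp_eq_mult_op_diag opnorm_mult_op_le linfty_diag norm_diag_le opnorm_nonneg)

lemma condexp_plus:
  "is_bounded_op T \<Longrightarrow> is_bounded_op B \<Longrightarrow> condexp (op_plus T B) = op_plus (condexp T) (condexp B)"
  by (simp add: condexp_eq_mult_op_diag bounded_op_plus(1) diag_plus mult_op_plus)

lemma condexp_minus:
  "is_bounded_op T \<Longrightarrow> is_bounded_op B \<Longrightarrow> condexp (op_minus T B) = op_minus (condexp T) (condexp B)"
  by (simp add: condexp_eq_mult_op_diag bounded_op_minus(1) diag_minus mult_op_diff)

section \<open>Tracial functionals\<close>

context inverse_semigroup_rep
begin

lemma condexp_in_RX: "is_bounded_op T \<Longrightarrow> condexp T \<in> RX \<alpha>"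
  by (simp add: condexp_eq_mult_op_diag mult_op_in_RX linfty_diag)

lemma weighted_shift_comp_indicator_apply:
  assumes "f \<in> ell2"
  shows "weighted_shift g s (mult_op (indicator A) f) = (\<lambda>y. g y *
    (if \<exists>x. \<alpha> s x = Some y then indicator A (the_preimage (\<alpha> s) y) * f (the_preimage (\<alpha> s) y) else 0))"
proof -
  have "mult_op (indicator A) f \<in> ell2"
    by (rule bounded_op_ell2[OF bounded_op_mult_op[OF linfty_indicator] assms])
  then show ?thesis using assms unfolding weighted_shift_def comp_def mult_op_apply[OF ell2_V]
    by (simp add: Vop_apply mult_op_apply)
qed

lemma compress_weighted_shift_moving:
  assumes g: "g \<in> linfty" and moving: "\<And>x y. \<alpha> s x = Some y \<Longrightarrow> x \<in> N \<Longrightarrow> y \<notin> N"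
  shows "mult_op (indicator N) \<circ> (weighted_shift g s \<circ> mult_op (indicator N)) = zero_op"
proof
  fix f
  show "(mult_op (indicator N) \<circ> (weighted_shift g s \<circ> mult_op (indicator N))) f = zero_op f"
  proof (cases "f \<in> ell2")
    case False
    then show ?thesis
      using bounded_op_zero[OF bounded_op_weighted_shift[OF g]] by (simp add: mult_op_outside mult_op_apply zero_op_def)
  next
    case True
    have "(weighted_shift g s \<circ> mult_op (indicator N)) f \<in> ell2"
      by (rule bounded_op_ell2[OF bounded_op_comp(1)[OF bounded_op_weighted_shift[OF g] bounded_op_mult_op[OF linfty_indicator]] True])
    moreover have "indicator N y * (weighted_shift g s \<circ> mult_op (indicator N)) f y = 0" for y
    proof (cases "\<exists>x. \<alpha> s x = Some y")
      case True
      then obtain x where x: "\<alpha> s x = Some y" by blast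
      then show ?thesis
        using moving[OF x] weighted_shift_comp_indicator_apply[OF \<open>f \<in> ell2\<close>] the_preimage_alpha[OF x]
        by (auto simp: indicator_def)
    qed (simp add: weighted_shift_comp_indicator_apply[OF True])
    ultimately show ?thesis by (simp add: mult_op_apply zero_op_def fun_eq_iff)
  qed
qed

lemma weighted_shift_comp_fixed_points:
  assumes g: "g \<in> linfty"
  shows "weighted_shift g s \<circ> mult_op (indicator {x. \<alpha> s x = Some x}) = condexp (weighted_shift g s)"
proof -
  let ?Fix = "{x. \<alpha> s x = Some x}"
  have diag: "diag (weighted_shift g s) = (\<lambda>x. g x * indicator ?Fix x)"
    by (auto simp: fun_eq_iff diag_def weighted_shift_delta indicator_def split: option.split)
  have fixed: "(if \<exists>x. \<alpha> s x = Some y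
      then indicator ?Fix (the_preimage (\<alpha> s) y) * f (the_preimage (\<alpha> s) y) else 0)
    = indicator ?Fix y * f y" for f :: "'x vec" and y
  proof (cases "\<exists>x. \<alpha> s x = Some y")
    case ex: True
    then obtain x where x: "\<alpha> s x = Some y" by blast
    show ?thesis
    proof (cases "x = y")
      case True
      then show ?thesis using ex x the_preimage_alpha[OF x] by simp
    next
      case False
      then have "\<alpha> s y \<noteq> Some y" using alpha_inj[OF x, of y] by auto
      then show ?thesis using ex x False the_preimage_alpha[OF x] by (simp add: indicator_def)
    qed
  qed (auto simp: indicator_def)
  show ?thesis
  proof
    fix f
    show "(weighted_shift g s \<circ> mult_op (indicator ?Fix)) f = condexp (weighted_shift g s) f"
      unfolding condexp_eq_mult_op_diag[OF bounded_op_weighted_shift[OF g]] diag comp_def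
    proof (cases "f \<in> ell2")
      case True
      then show "weighted_shift g s (mult_op (indicator ?Fix) f) = mult_op (\<lambda>x. g x * indicator ?Fix x) f"
        unfolding weighted_shift_comp_indicator_apply[OF True] fixed by (simp add: mult_op_apply mult.assoc)
    qed (simp add: mult_op_outside bounded_op_zero[OF bounded_op_weighted_shift[OF g]])
  qed
qed

end

locale tracial_functional = inverse_semigroup_rep mult e \<alpha>
  for mult :: "'s \<Rightarrow> 's \<Rightarrow> 's" and e and \<alpha> :: "'s \<Rightarrow> ('x \<rightharpoonup> 'x)" +
  fixes \<phi> :: "'x op \<Rightarrow> complex"
  assumes phi_add: "\<forall>A\<in>RX \<alpha>. \<forall>B\<in>RX \<alpha>. \<phi> (op_plus A B) = \<phi> A + \<phi> B"
    and phi_scale: "\<forall>c. \<forall>A\<in>RX \<alpha>. \<phi> (op_scale c A) = c * \<phi> A"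
    and phi_trace: "\<forall>A\<in>RX \<alpha>. \<forall>B\<in>RX \<alpha>. \<phi> (A \<circ> B) = \<phi> (B \<circ> A)"
begin

lemma phi_plus: "A \<in> RX \<alpha> \<Longrightarrow> B \<in> RX \<alpha> \<Longrightarrow> \<phi> (op_plus A B) = \<phi> A + \<phi> B"
  using phi_add by blast

lemma phi_minus: "A \<in> RX \<alpha> \<Longrightarrow> B \<in> RX \<alpha> \<Longrightarrow> \<phi> (op_minus A B) = \<phi> A - \<phi> B"
  using phi_plus[OF _ RX_op_closed(3)] phi_scale unfolding op_minus_eq_plus_scale by simp

lemma phi_zero_op: "\<phi> zero_op = 0"
proof -
  have "(zero_op :: 'x op) = op_scale 0 (mult_op (\<lambda>_. 0))" by (simp add: op_scale_def zero_op_def)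
  moreover have "\<phi> (op_scale 0 (mult_op (\<lambda>_. 0))) = 0 * \<phi> (mult_op (\<lambda>_. 0))"
    using phi_scale mult_op_in_RX[OF linfty_const[of 0]] by blast
  ultimately show ?thesis by simp
qed

text \<open>The trace property turns \<open>T P\<^sub>N\<close> into \<open>P\<^sub>N T P\<^sub>N\<close>, which vanishes when \<open>\<alpha>\<^sub>s\<close> moves \<open>N\<close>
  off itself.\<close>
lemma phi_weighted_shift_comp_moving:
  assumes g: "g \<in> linfty" and moving: "\<And>x y. \<alpha> s x = Some y \<Longrightarrow> x \<in> N \<Longrightarrow> y \<notin> N"
  shows "\<phi> (weighted_shift g s \<circ> mult_op (indicator N)) = 0"
proof -
  have P: "mult_op (indicator N) \<in> RX \<alpha>" by (rule mult_op_in_RX[OF linfty_indicator])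
  have TP: "weighted_shift g s \<circ> mult_op (indicator N) \<in> RX \<alpha>"
    using RX_op_closed(2)[OF weighted_shift_sums_subset_RX[OF weighted_shift_sums.weighted_shift[OF g]] P] .
  have "\<phi> (weighted_shift g s \<circ> mult_op (indicator N)) = \<phi> ((weighted_shift g s \<circ> mult_op (indicator N)) \<circ> mult_op (indicator N))"
    by (simp add: o_assoc[symmetric] mult_op_indicator_idem)
  also have "\<dots> = \<phi> (mult_op (indicator N) \<circ> (weighted_shift g s \<circ> mult_op (indicator N)))"
    using phi_trace TP P by blast
  finally show ?thesis using compress_weighted_shift_moving[OF g moving] phi_zero_op by simp
qed

text \<open>A proper 3-colouring of the graph of \<open>\<alpha>\<^sub>s\<close> off its fixed points splits the non-fixed
  points into three sets, each moved off itself by \<open>\<alpha>\<^sub>s\<close>.\<close>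
lemma phi_weighted_shift_comp_non_fixed:
  assumes g: "g \<in> linfty"
  shows "\<phi> (weighted_shift g s \<circ> mult_op (indicator (- {x. \<alpha> s x = Some x}))) = 0"
proof -
  obtain c :: "'x \<Rightarrow> nat" where c3: "\<And>x. c x < 3"
    and proper: "\<And>x y. \<alpha> s x = Some y \<Longrightarrow> y \<noteq> x \<Longrightarrow> c x \<noteq> c y"
    using partial_injection_three_colouring[OF partial_bij[rule_format]] by blast
  let ?T = "weighted_shift g s"
  let ?NF = "- {x. \<alpha> s x = Some x}"
  have TP: "?T \<circ> mult_op (indicator A) \<in> RX \<alpha>" for A
    by (rule RX_op_closed(2)[OF weighted_shift_sums_subset_RX[OF weighted_shift_sums.weighted_shift[OF g]] mult_op_in_RX[OF linfty_indicator]])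
  have monochromatic: "\<phi> (?T \<circ> mult_op (indicator N)) = 0"
    if "N \<subseteq> ?NF" "\<And>x. x \<in> N \<Longrightarrow> c x = i" for N i
    using that proper by (intro phi_weighted_shift_comp_moving[OF g]) force
  have split: "\<phi> (?T \<circ> mult_op (indicator A)) =
      \<phi> (?T \<circ> mult_op (indicator (A \<inter> {x. c x = i}))) + \<phi> (?T \<circ> mult_op (indicator (A - {x. c x = i})))"
    for A i
    unfolding comp_mult_op_indicator_split[OF bounded_op_weighted_shift[OF g], where A=A and B="{x. c x = i}"]
    by (rule phi_plus[OF TP TP])
  have "\<phi> (?T \<circ> mult_op (indicator (?NF \<inter> {x. c x = 0}))) = 0"
    by (rule monochromatic) auto
  moreover have "\<phi> (?T \<circ> mult_op (indicator ((?NF - {x. c x = 0}) \<inter> {x. c x = 1}))) = 0"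
    by (rule monochromatic) auto
  moreover have "\<phi> (?T \<circ> mult_op (indicator (?NF - {x. c x = 0} - {x. c x = 1}))) = 0"
  proof (rule monochromatic)
    show "c x = 2" if "x \<in> ?NF - {x. c x = 0} - {x. c x = 1}" for x
      using that c3[of x] by simp
  qed auto
  ultimately show ?thesis
    by (simp only: split[of ?NF 0] split[of "?NF - {x. c x = 0}" 1]) simp
qed

lemma phi_weighted_shift_condexp:
  assumes g: "g \<in> linfty"
  shows "\<phi> (weighted_shift g s) = \<phi> (condexp (weighted_shift g s))"
proof -
  let ?Fix = "{x. \<alpha> s x = Some x}"
  have TP: "weighted_shift g s \<circ> mult_op (indicator A) \<in> RX \<alpha>" for A
    by (rule RX_op_closed(2)[OF weighted_shift_sums_subset_RX[OF weighted_shift_sums.weighted_shift[OF g]] mult_op_in_RX[OF linfty_indicator]])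
  have "weighted_shift g s = op_plus (weighted_shift g s \<circ> mult_op (indicator ?Fix)) (weighted_shift g s \<circ> mult_op (indicator (- ?Fix)))"
    using comp_mult_op_indicator_split[OF bounded_op_weighted_shift[OF g], where A=UNIV and B="?Fix"]
      comp_mult_op_indicator_UNIV[OF bounded_op_weighted_shift[OF g]] by (simp add: Compl_eq_Diff_UNIV)
  then have "\<phi> (weighted_shift g s) = \<phi> (weighted_shift g s \<circ> mult_op (indicator ?Fix)) + \<phi> (weighted_shift g s \<circ> mult_op (indicator (- ?Fix)))"
    by (metis phi_plus TP)
  then show ?thesis using phi_weighted_shift_comp_non_fixed[OF g] weighted_shift_comp_fixed_points[OF g] by simp
qed

lemma phi_weighted_shift_sums_condexp: "A \<in> weighted_shift_sums \<Longrightarrow> \<phi> A = \<phi> (condexp A)"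
proof (induction rule: weighted_shift_sums.induct)
  case (weighted_shift g s)
  then show ?case by (rule phi_weighted_shift_condexp)
next
  case (plus A B)
  note bdd = bounded_op_weighted_shift_sums[OF plus.hyps(1)] bounded_op_weighted_shift_sums[OF plus.hyps(2)]
  have "\<phi> (op_plus A B) = \<phi> (condexp A) + \<phi> (condexp B)"
    using phi_plus[OF weighted_shift_sums_subset_RX[OF plus.hyps(1)] weighted_shift_sums_subset_RX[OF plus.hyps(2)]] plus.IH by simp
  also have "\<dots> = \<phi> (condexp (op_plus A B))"
    unfolding condexp_plus[OF bdd] by (rule phi_plus[symmetric, OF condexp_in_RX condexp_in_RX, OF bdd])
  finally show ?case .
qed

text \<open>Approximate \<open>T\<close> within \<open>\<epsilon>\<close> by \<open>B\<close> in \<open>weighted_shift_sums\<close>; as \<open>\<phi>\<close> and \<open>condexp\<close> are both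
  bounded, \<open>\<phi> T - \<phi> (condexp T)\<close> differs from \<open>\<phi> B - \<phi> (condexp B) = 0\<close> by \<open>O(\<epsilon>)\<close>.\<close>
lemma phi_condexp_RX:
  assumes bounded: "\<exists>K. \<forall>A\<in>RX \<alpha>. cmod (\<phi> A) \<le> K * opnorm A" and T: "T \<in> RX \<alpha>"
  shows "\<phi> T = \<phi> (condexp T)"
proof -
  obtain K where K: "\<forall>A\<in>RX \<alpha>. cmod (\<phi> A) \<le> K * opnorm A" using bounded by blast
  have K0: "cmod (\<phi> A) \<le> max K 0 * opnorm A" if "A \<in> RX \<alpha>" "is_bounded_op A" for A
    using K that opnorm_nonneg[OF that(2)] mult_right_mono[of K "max K 0" "opnorm A"] by force
  have TA: "T \<in> norm_closure weighted_shift_sums" using RX_subset_norm_closure T by blast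
  note Tb = norm_closure_bounded[OF TA]
  have "\<phi> T - \<phi> (condexp T) = 0"
  proof (rule complex_eq_0_if_small)
    show "0 \<le> 2 * max K 0" by simp
    fix \<epsilon> :: real assume "0 < \<epsilon>"
    then obtain B where B: "B \<in> weighted_shift_sums" "opnorm (op_minus T B) < \<epsilon>" by (rule norm_closureE[OF TA])
    note bdd = bounded_op_weighted_shift_sums[OF B(1)] bounded_op_minus(1)[OF Tb bounded_op_weighted_shift_sums[OF B(1)]]
    note RX = weighted_shift_sums_subset_RX[OF B(1)] RX_op_closed(4)[OF T weighted_shift_sums_subset_RX[OF B(1)]]
    have "\<phi> T - \<phi> (condexp T) = \<phi> (op_minus T B) - \<phi> (condexp (op_minus T B))"
      using phi_minus[OF T RX(1)] phi_weighted_shift_sums_condexp[OF B(1)] condexp_minus[OF Tb bdd(1)]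
        phi_minus[OF condexp_in_RX[OF Tb] condexp_in_RX[OF bdd(1)]] by simp
    also have "cmod \<dots> \<le> max K 0 * opnorm (op_minus T B) + max K 0 * opnorm (condexp (op_minus T B))"
      using norm_triangle_ineq4[of "\<phi> (op_minus T B)" "\<phi> (condexp (op_minus T B))"] K0[OF RX(2) bdd(2)]
        K0[OF condexp_in_RX[OF bdd(2)] bounded_op_condexp[OF bdd(2)]] by linarith
    also have "\<dots> \<le> max K 0 * \<epsilon> + max K 0 * \<epsilon>"
      using B(2) opnorm_condexp_le[OF bdd(2)] by (intro add_mono mult_left_mono) auto
    finally show "cmod (\<phi> T - \<phi> (condexp T)) \<le> \<epsilon> * (2 * max K 0)" by simp
  qed
  then show ?thesis by simp
qed

end
theorem mainTheorem15:
  fixes mult :: "'s \<Rightarrow> 's \<Rightarrow> 's" and e :: 's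
    and \<alpha> :: "'s \<Rightarrow> ('x \<rightharpoonup> 'x)"
    and \<phi> :: "'x op \<Rightarrow> complex"
  assumes countable_S: "countable (UNIV :: 's set)"
    and assoc: "\<forall>a b c. mult (mult a b) c = mult a (mult b c)"
    and unit: "\<forall>a. mult e a = a \<and> mult a e = a"
    and inverse: "\<forall>s. \<exists>!t. mult (mult s t) s = s \<and> mult (mult t s) t = t"
    and partial_bij: "\<forall>s. inj_on (\<alpha> s) (dom (\<alpha> s))"
    and hom: "\<forall>s t. \<alpha> (mult s t) = \<alpha> s \<circ>\<^sub>m \<alpha> t"
    and unital: "\<alpha> e = Some"
    and phi_add: "\<forall>A\<in>RX \<alpha>. \<forall>B\<in>RX \<alpha>. \<phi> (op_plus A B) = \<phi> A + \<phi> B"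
    and phi_scale: "\<forall>c. \<forall>A\<in>RX \<alpha>. \<phi> (op_scale c A) = c * \<phi> A"
    and phi_bounded: "\<exists>K. \<forall>A\<in>RX \<alpha>. cmod (\<phi> A) \<le> K * opnorm A"
    and phi_trace: "\<forall>A\<in>RX \<alpha>. \<forall>B\<in>RX \<alpha>. \<phi> (A \<circ> B) = \<phi> (B \<circ> A)"
  shows "\<forall>T\<in>RX \<alpha>. \<phi> T = \<phi> (condexp T)"
proof -
  interpret tracial_functional mult e \<alpha> \<phi>
    by unfold_locales (fact partial_bij hom unital inverse phi_add phi_scale phi_trace)+
  show ?thesis using phi_condexp_RX[OF phi_bounded] by blast
qed

end
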